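(* Let $L\subset\mathbb{R}^{12}$ be a $12$-dimensional lattice and $P_0$ a Delaunay polytope of $L$ with $14$ vertices, whose vertex set $V$ is the disjoint union of four sets $V(\Sigma_1^2),V(\Sigma_2^2)$ (each of size $3$) and $V(\Sigma_1^3),V(\Sigma_2^3)$ (each of size $4$), such that the squared Euclidean distances $d(u,v)=\|u-v\|^2$ between distinct vertices are: $d(u,v)=7$ if $u,v$ lie in the same set $V(\Sigma_i^q)$; $d(u,v)=6$ if $u\in V(\Sigma_i^2)$, $v\in V(\Sigma_i^3)$, $i=1,2$; $d(u,v)=10$ if $u\in V(\Sigma_1^2)$, $v\in V(\Sigma_2^2)$; $d(u,v)=12$ if $u\in V(\Sigma_1^3), v\in V(\Sigma_2^3)$, or $u\in V(\Sigma_1^2), v\in V(\Sigma_2^3)$, or $u\in V(\Sigma_2^2), v\in V(\Sigma_1^3)$. Then: (i) for every $u\in V$, the set $V\setminus\{u\}$ is an $\mathbb{R}$-affine basis of $P_0$; (ii) the $\mathbb{Z}$-module of integral affine dependencies $Y(P_0)=\{y\in\mathbb{Z}^V:\sum_v y(v)v=0,\ \sum_v y(v)=0\}$ is $y\mathbb{Z}$, where $y(v)=3$ on $V(\Sigma_1^2)$, $-3$ on $V(\Sigma_2^2)$, $2$ on $V(\Sigma_2^3)$, $-2$ on $V(\Sigma_1^3)$; (iii) $P_0$ is not $\mathbb{Z}$-basic; (iv) the rank of $P_0$ is $77$.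
   Context: A Delaunay polytope of a lattice $L\subset\mathbb{R}^n$ is a polytope whose vertex set is $L\cap S$, where $S=S(c,r)$ is an empty sphere: $\|a-c\|^2\ge r^2$ for all $a\in L$, and $S\cap L$ contains $n+1$ affinely independent points. For a ring $\mathbb{K}$, a subset $W\subseteq V(P)$ is $\mathbb{K}$-generating if every vertex $w\in V(P)$ can be written $w=\sum_{v\in W}z(v)v$ with $z(v)\in\mathbb{K}$ and $\sum_{v\in W}z(v)=1$; a $\mathbb{K}$-generating set of size $n+1$ is a $\mathbb{K}$-affine basis, and $P$ is $\mathbb{K}$-basic if it has a $\mathbb{K}$-affine basis. For a finite set $V$, the hypermetric cone $HYP(V)$ is the set of functions $d:V\times V\to\mathbb{R}$ with $d(u,v)=d(v,u)$, $d(v,v)=0$, and $\sum_{u,v\in V}b_ub_v d(u,v)\le 0$ for all $b\in\mathbb{Z}^V$ with $\sum_v b_v=1$. The rank of a Delaunay polytope $P$ is the dimension of the minimal face of $HYP(V(P))$ containing $d_P(u,v)=\|u-v\|^2$. *)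

theory Defs
  imports "HOL-Analysis.Analysis"
begin

definition is_lattice :: "'a::euclidean_space set \<Rightarrow> bool" where
  "is_lattice L \<longleftrightarrow> (\<exists>B. independent B \<and> card B = DIM('a) \<and>
      L = {(\<Sum>b\<in>B. of_int (z b) *\<^sub>R b) | z. True})"

definition delaunay_polytope :: "'a::euclidean_space set \<Rightarrow> 'a set \<Rightarrow> bool" where
  "delaunay_polytope L P \<longleftrightarrow> (\<exists>c r.
      (\<forall>a\<in>L. (norm (a - c))\<^sup>2 \<ge> r\<^sup>2) \<and>
      (\<exists>W. W \<subseteq> L \<inter> sphere c r \<and> \<not> affine_dependent W \<and> card W = DIM('a) + 1) \<and>
      P = convex hull (L \<inter> sphere c r))"

definition vertices :: "'a::real_vector set \<Rightarrow> 'a set" where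
  "vertices P = {v. v extreme_point_of P}"

definition K_generating :: "real set \<Rightarrow> 'a::real_vector set \<Rightarrow> 'a set \<Rightarrow> bool" where
  "K_generating K V W \<longleftrightarrow> W \<subseteq> V \<and> (\<forall>w\<in>V. \<exists>z. (\<forall>v\<in>W. z v \<in> K) \<and>
      w = (\<Sum>v\<in>W. z v *\<^sub>R v) \<and> (\<Sum>v\<in>W. z v) = 1)"

definition K_affine_basis :: "real set \<Rightarrow> 'a::euclidean_space set \<Rightarrow> 'a set \<Rightarrow> bool" where
  "K_affine_basis K V W \<longleftrightarrow> K_generating K V W \<and> card W = DIM('a) + 1"

definition K_basic :: "real set \<Rightarrow> 'a::euclidean_space set \<Rightarrow> bool" where
  "K_basic K V \<longleftrightarrow> (\<exists>W. K_affine_basis K V W)"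

definition int_affine_deps :: "'a::real_vector set \<Rightarrow> ('a \<Rightarrow> int) set" where
  "int_affine_deps V = {y. (\<forall>v. v \<notin> V \<longrightarrow> y v = 0) \<and>
      (\<Sum>v\<in>V. of_int (y v) *\<^sub>R v) = 0 \<and> (\<Sum>v\<in>V. y v) = 0}"

(* Hypermetric cone HYP(V), elements of R^(V\<times>V) represented as functions on pairs
   vanishing outside V\<times>V *)
definition HYP :: "'a set \<Rightarrow> ('a \<times> 'a \<Rightarrow> real) set" where
  "HYP V = {d. (\<forall>u v. (u \<notin> V \<or> v \<notin> V) \<longrightarrow> d (u, v) = 0) \<and>
      (\<forall>u v. d (u, v) = d (v, u)) \<and> (\<forall>v. d (v, v) = 0) \<and>
      (\<forall>b::'a \<Rightarrow> int. (\<forall>v. v \<notin> V \<longrightarrow> b v = 0) \<longrightarrow> (\<Sum>v\<in>V. b v) = 1 \<longrightarrow>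
          (\<Sum>u\<in>V. \<Sum>v\<in>V. of_int (b u * b v) * d (u, v)) \<le> 0)}"

(* faces of a convex set of real-valued functions (pointwise vector structure);
   this is face_of spelled out for function spaces *)
definition fun_face_of :: "('x \<Rightarrow> real) set \<Rightarrow> ('x \<Rightarrow> real) set \<Rightarrow> bool" where
  "fun_face_of F S \<longleftrightarrow> F \<subseteq> S \<and>
      (\<forall>a\<in>F. \<forall>b\<in>F. \<forall>t::real. 0 \<le> t \<and> t \<le> 1 \<longrightarrow> (\<lambda>x. (1 - t) * a x + t * b x) \<in> F) \<and>
      (\<forall>a\<in>S. \<forall>b\<in>S. \<forall>t::real. 0 < t \<and> t < 1 \<longrightarrow> (\<lambda>x. (1 - t) * a x + t * b x) \<in> F
           \<longrightarrow> a \<in> F \<and> b \<in> F)"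

definition min_face :: "('x \<Rightarrow> real) set \<Rightarrow> ('x \<Rightarrow> real) \<Rightarrow> ('x \<Rightarrow> real) set" where
  "min_face S d = \<Inter>{F. fun_face_of F S \<and> d \<in> F}"

definition fun_lin_indep :: "('x \<Rightarrow> real) set \<Rightarrow> bool" where
  "fun_lin_indep D \<longleftrightarrow> finite D \<and>
      (\<forall>c. (\<forall>x. (\<Sum>g\<in>D. c g * g x) = 0) \<longrightarrow> (\<forall>g\<in>D. c g = 0))"

definition fun_dim :: "('x \<Rightarrow> real) set \<Rightarrow> nat" where
  "fun_dim F = Max {card D | D. \<exists>f0\<in>F. D \<subseteq> (\<lambda>f x. f x - f0 x) ` F \<and> fun_lin_indep D}"

definition dist_fun :: "'a::real_normed_vector set \<Rightarrow> ('a \<times> 'a \<Rightarrow> real)" where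
  "dist_fun V = (\<lambda>(u, v). if u \<in> V \<and> v \<in> V then (norm (u - v))\<^sup>2 else 0)"

definition delaunay_rank :: "'a::real_normed_vector set \<Rightarrow> nat" where
  "delaunay_rank V = fun_dim (min_face (HYP V) (dist_fun V))"

end

theory Submission
  imports Defs "HOL-Library.Function_Algebras"
begin

(* The weights y = 3, -3, 2, -2 on V(Sigma_1^2), V(Sigma_2^2), V(Sigma_2^3), V(Sigma_1^3)
   annihilate every row of the squared-distance matrix d, and for sum y = 0 one has
   sum_{u,v} y_u y_v d(u,v) = -2 |sum_v y_v v|^2; so y is an affine dependency. Since V
   contains 13 affinely independent points, every real dependency is a multiple of y, and
   y has full support: V is an affine circuit. This gives (i)-(iii): deleting any vertex
   leaves a real affine basis, the integral dependencies are Z y because gcd(3, 2) = 1, and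
   V - {u} generates u over Z only if y_u divides every y_v.

   For (iv), an integral b with sum b = 1 is tight (sum b_u b_v d(u,v) = 0) exactly when
   sum b_v v is a lattice point on the empty sphere, i.e. a vertex w, i.e. b = e_w + k y.
   Testing a hypermetric of the minimal face on e_w + y and e_w - y shows that its
   y-weighted row sums vanish, so the face is parallel to the space of balanced forms:
   symmetric, hollow, with sum_v y_v g(w,v) = 0 for all w. Conversely d +- eps g is
   hypermetric for every balanced g: the quadratic form of g only involves the differences
   b_u/y_u - b_v/y_v, which are controlled by the slack -sum b_u b_v d(u,v) of a non-tight
   b, and that slack is at least 1 since the squared distances are integers. Finally the
   balanced forms have dimension C(13,2) - 1 = 77. *)

section \<open>Squared distances and affine relations\<close>

lemma square_add_le: "(a + b)\<^sup>2 \<le> 2 * a\<^sup>2 + 2 * (b::real)\<^sup>2"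
proof -
  have "0 \<le> (a - b)\<^sup>2" by simp
  then show ?thesis by (simp add: power2_eq_square algebra_simps)
qed

lemma norm_diff_sq_recenter:
  fixes u v c :: "'a::real_inner"
  shows "(norm (u - v))\<^sup>2 = (norm (u - c))\<^sup>2 + (norm (v - c))\<^sup>2 - 2 * ((u - c) \<bullet> (v - c))"
proof -
  have "u - v = (u - c) - (v - c)" by simp
  then show ?thesis
    by (simp only: power2_norm_eq_inner inner_diff_left inner_diff_right inner_commute)
      (simp add: inner_commute algebra_simps)
qed

lemma sum_sum_mult_norm_diff_sq:
  fixes V :: "'a::real_inner set" and b :: "'a \<Rightarrow> real"
  shows "(\<Sum>u\<in>V. \<Sum>v\<in>V. b u * b v * (norm (u - v))\<^sup>2)
       = 2 * sum b V * (\<Sum>v\<in>V. b v * (norm (v - c))\<^sup>2) - 2 * (norm (\<Sum>v\<in>V. b v *\<^sub>R (v - c)))\<^sup>2"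
proof -
  have norm_sq: "(norm (\<Sum>v\<in>V. b v *\<^sub>R (v - c)))\<^sup>2 = (\<Sum>u\<in>V. \<Sum>v\<in>V. b u * b v * ((u - c) \<bullet> (v - c)))"
    by (simp add: power2_norm_eq_inner inner_sum_left inner_sum_right sum_distrib_left mult.assoc
        inner_commute mult.left_commute)
  have "(\<Sum>u\<in>V. \<Sum>v\<in>V. b u * b v * (norm (u - v))\<^sup>2)
      = (\<Sum>u\<in>V. \<Sum>v\<in>V. b u * b v * (norm (u - c))\<^sup>2 + b u * b v * (norm (v - c))\<^sup>2
                          - 2 * (b u * b v * ((u - c) \<bullet> (v - c))))"
  proof (intro sum.cong refl)
    fix u v
    show "b u * b v * (norm (u - v))\<^sup>2 = b u * b v * (norm (u - c))\<^sup>2 + b u * b v * (norm (v - c))\<^sup>2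
            - 2 * (b u * b v * ((u - c) \<bullet> (v - c)))"
      unfolding norm_diff_sq_recenter[of u v c] by (simp only: algebra_simps)
  qed
  also have "\<dots> = (\<Sum>u\<in>V. \<Sum>v\<in>V. b u * b v * (norm (u - c))\<^sup>2)
                  + (\<Sum>u\<in>V. \<Sum>v\<in>V. b u * b v * (norm (v - c))\<^sup>2)
                  - 2 * (\<Sum>u\<in>V. \<Sum>v\<in>V. b u * b v * ((u - c) \<bullet> (v - c)))"
    by (simp add: sum.distrib sum_subtractf sum_distrib_left)
  also have "(\<Sum>u\<in>V. \<Sum>v\<in>V. b u * b v * (norm (u - c))\<^sup>2) = sum b V * (\<Sum>v\<in>V. b v * (norm (v - c))\<^sup>2)"
    by (simp add: sum_distrib_left sum_distrib_right algebra_simps)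
  also have "(\<Sum>u\<in>V. \<Sum>v\<in>V. b u * b v * (norm (v - c))\<^sup>2) = sum b V * (\<Sum>v\<in>V. b v * (norm (v - c))\<^sup>2)"
    unfolding sum_product by (simp add: mult_ac)
  finally show ?thesis by (simp only: norm_sq)
qed

definition affine_relation :: "'a::real_vector set \<Rightarrow> ('a \<Rightarrow> real) \<Rightarrow> bool" where
  "affine_relation V t \<longleftrightarrow> sum t V = 0 \<and> (\<Sum>v\<in>V. t v *\<^sub>R v) = 0"

lemma affine_relation_of_null_rows:
  fixes V :: "'a::real_inner set"
  assumes "sum y V = 0" and "\<And>u. u \<in> V \<Longrightarrow> (\<Sum>v\<in>V. y v * (norm (u - v))\<^sup>2) = 0"
  shows "affine_relation V y"
proof -
  have "(\<Sum>u\<in>V. \<Sum>v\<in>V. y u * y v * (norm (u - v))\<^sup>2) = 0"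
    using assms(2) by (simp add: mult.assoc flip: sum_distrib_left)
  then have "norm (\<Sum>v\<in>V. y v *\<^sub>R (v - 0)) = 0"
    using sum_sum_mult_norm_diff_sq[of y V 0] assms(1) by simp
  then show ?thesis using assms(1) by (simp add: affine_relation_def)
qed

lemma sum_sum_mult_norm_diff_sq_sphere:
  fixes V :: "'a::real_inner set"
  assumes "V \<subseteq> sphere c r" and "sum b V = 1"
  shows "(\<Sum>u\<in>V. \<Sum>v\<in>V. b u * b v * (norm (u - v))\<^sup>2) = 2 * r\<^sup>2 - 2 * (norm ((\<Sum>v\<in>V. b v *\<^sub>R v) - c))\<^sup>2"
proof -
  have "(\<Sum>v\<in>V. b v * (norm (v - c))\<^sup>2) = (\<Sum>v\<in>V. b v * r\<^sup>2)"
    using assms(1) by (intro sum.cong refl) (auto simp: dist_norm norm_minus_commute)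
  then have "(\<Sum>v\<in>V. b v * (norm (v - c))\<^sup>2) = r\<^sup>2"
    using assms(2) by (simp flip: sum_distrib_right)
  moreover have "(\<Sum>v\<in>V. b v *\<^sub>R (v - c)) = (\<Sum>v\<in>V. b v *\<^sub>R v) - c"
    using assms(2) by (simp add: scaleR_diff_right sum_subtractf flip: scaleR_sum_left)
  ultimately show ?thesis using sum_sum_mult_norm_diff_sq[of b V c] assms(2) by simp
qed

lemma affine_relation_multiple_of_insert:
  assumes "finite W" and "u0 \<notin> W" and "\<not> affine_dependent W"
    and y: "affine_relation (insert u0 W) y" "y u0 \<noteq> 0"
    and t: "affine_relation (insert u0 W) t"
  shows "\<exists>k. \<forall>v\<in>insert u0 W. t v = k * y v"
proof -
  define k where "k = t u0 / y u0"
  define s where "s v = t v - k * y v" for v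
  have "s u0 = 0" using y(2) by (simp add: s_def k_def)
  moreover have "affine_relation (insert u0 W) s"
    using y(1) t by (simp add: affine_relation_def s_def sum_subtractf scaleR_diff_left
        flip: sum_distrib_left scaleR_sum_right scaleR_scaleR)
  ultimately have "affine_relation W s"
    using assms(1,2) by (simp add: affine_relation_def)
  then have "\<forall>v\<in>W. s v = 0"
    using assms(3) affine_dependent_explicit_finite[OF assms(1)] by (auto simp: affine_relation_def)
  then show ?thesis using \<open>s u0 = 0\<close> by (auto simp: s_def intro!: exI[of _ k])
qed

section \<open>Affine circuits\<close>

locale affine_circuit =
  fixes V :: "'a::real_vector set" and y :: "'a \<Rightarrow> int"
  assumes finite: "finite V"
    and relation: "affine_relation V (\<lambda>v. of_int (y v))"
    and nonzero: "\<And>v. v \<in> V \<Longrightarrow> y v \<noteq> 0"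
    and outside: "\<And>v. v \<notin> V \<Longrightarrow> y v = 0"
    and relation_multiple: "\<And>t. affine_relation V t \<Longrightarrow> \<exists>k. \<forall>v\<in>V. t v = k * of_int (y v)"
begin

lemma sum_y: "sum y V = 0"
  using relation by (simp add: affine_relation_def flip: of_int_sum)

lemma affine_relation_remove_extend:
  assumes "u \<in> V" and "affine_relation (V - {u}) t"
  shows "affine_relation V (\<lambda>v. if v = u then 0 else t v)"
  using assms finite
  by (simp add: affine_relation_def sum.remove[of V u] if_distrib[of "\<lambda>a. a *\<^sub>R _"] cong: if_cong)

lemma affine_independent_remove:
  assumes "u \<in> V"
  shows "\<not> affine_dependent (V - {u})"
proof
  assume "affine_dependent (V - {u})"
  then obtain t where t: "affine_relation (V - {u}) t" "\<exists>v\<in>V - {u}. t v \<noteq> 0"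
    using affine_dependent_explicit_finite[of "V - {u}"] finite by (auto simp: affine_relation_def)
  obtain k where k: "\<forall>v\<in>V. (if v = u then 0 else t v) = k * of_int (y v)"
    using relation_multiple[OF affine_relation_remove_extend[OF assms t(1)]] by blast
  then have "k = 0" using assms nonzero[OF assms] by (metis mult_eq_0_iff of_int_eq_0_iff)
  then show False using k t(2) by (metis DiffE singletonI mult_zero_left)
qed


lemma generating_remove:
  assumes "u \<in> V"
  shows "K_generating UNIV V (V - {u})"
  unfolding K_generating_def
proof (intro conjI ballI)
  fix w assume w: "w \<in> V"
  show "\<exists>z. (\<forall>v\<in>V - {u}. z v \<in> UNIV) \<and> w = (\<Sum>v\<in>V - {u}. z v *\<^sub>R v) \<and> sum z (V - {u}) = 1"
  proof (cases "w = u")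
    case False
    then show ?thesis
      using w finite by (intro exI[of _ "\<lambda>v. if v = w then 1 else 0"]) (simp add: if_distrib[of "\<lambda>a. a *\<^sub>R _"] cong: if_cong)
  next
    case True
    have yu: "real_of_int (y u) \<noteq> 0" using nonzero[OF assms] by simp
    have vec: "(\<Sum>v\<in>V - {u}. of_int (y v) *\<^sub>R v) = - (of_int (y u) *\<^sub>R u)"
      using relation sum.remove[OF finite assms, of "\<lambda>v. of_int (y v) *\<^sub>R v"]
      by (simp add: affine_relation_def eq_neg_iff_add_eq_0 add.commute)
    have sc: "(\<Sum>v\<in>V - {u}. real_of_int (y v)) = - of_int (y u)"
      using relation sum.remove[OF finite assms, of "\<lambda>v. real_of_int (y v)"]
      by (simp add: affine_relation_def)
    have "(\<Sum>v\<in>V - {u}. (- of_int (y v) / of_int (y u)) *\<^sub>R v)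
        = (- inverse (of_int (y u))) *\<^sub>R (\<Sum>v\<in>V - {u}. of_int (y v) *\<^sub>R v)"
      unfolding scaleR_sum_right by (intro sum.cong refl) (simp add: divide_inverse mult.commute)
    moreover have "(\<Sum>v\<in>V - {u}. - of_int (y v) / of_int (y u)) = (1::real)"
      using sc yu by (simp add: sum_negf flip: sum_divide_distrib)
    ultimately show ?thesis
      using True yu vec by (intro exI[of _ "\<lambda>v. - of_int (y v) / of_int (y u)"]) simp
  qed
qed auto

lemma int_affine_deps_eq:
  assumes "(\<Sum>v\<in>V. a v * y v) = 1"
  shows "int_affine_deps V = {(\<lambda>v. k * y v) | k. True}"
proof (intro set_eqI iffI)
  fix t assume "t \<in> int_affine_deps V"
  then have out: "\<And>v. v \<notin> V \<Longrightarrow> t v = 0" and "affine_relation V (\<lambda>v. of_int (t v))"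
    by (auto simp: int_affine_deps_def affine_relation_def simp flip: of_int_sum)
  then obtain k where k: "\<forall>v\<in>V. real_of_int (t v) = k * of_int (y v)"
    using relation_multiple by blast
  have "real_of_int (\<Sum>v\<in>V. a v * t v) = k * of_int (\<Sum>v\<in>V. a v * y v)"
    using k by (simp add: sum_distrib_left mult_ac)
  then have k_int: "k = of_int (\<Sum>v\<in>V. a v * t v)" using assms by simp
  have "t v = (\<Sum>v\<in>V. a v * t v) * y v" for v
  proof (cases "v \<in> V")
    case True
    then have "real_of_int (t v) = of_int ((\<Sum>v\<in>V. a v * t v) * y v)"
      using k k_int by (simp only: of_int_mult)
    then show ?thesis by (simp only: of_int_eq_iff)
  qed (simp add: out outside)
  then show "t \<in> {(\<lambda>v. k * y v) | k. True}" by blast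
next
  fix t assume "t \<in> {(\<lambda>v. k * y v) | k. True}"
  then obtain k where t: "t = (\<lambda>v. k * y v)" by blast
  have "(\<Sum>v\<in>V. of_int (t v) *\<^sub>R v) = of_int k *\<^sub>R (\<Sum>v\<in>V. of_int (y v) *\<^sub>R v)"
    by (simp add: t scaleR_sum_right)
  moreover have "(\<Sum>v\<in>V. t v) = k * (\<Sum>v\<in>V. y v)" by (simp add: t sum_distrib_left)
  moreover have "(\<Sum>v\<in>V. y v) = 0"
    using relation by (simp add: affine_relation_def flip: of_int_sum)
  ultimately show "t \<in> int_affine_deps V"
    using relation outside by (simp add: int_affine_deps_def affine_relation_def t)
qed

lemma int_generating_remove_dvd:
  assumes u: "u \<in> V" and gen: "K_generating \<int> V (V - {u})" and v: "v \<in> V"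
  shows "y u dvd y v"
proof (cases "v = u")
  case False
  obtain z where z: "\<forall>v\<in>V - {u}. z v \<in> \<int>" "u = (\<Sum>v\<in>V - {u}. z v *\<^sub>R v)" "sum z (V - {u}) = 1"
    using gen u by (auto simp: K_generating_def)
  define t where "t v = (if v = u then -1 else z v)" for v
  have "affine_relation V t"
    using z finite u by (simp add: affine_relation_def t_def sum.remove[of V u] cong: if_cong)
  then obtain k where k: "\<forall>v\<in>V. t v = k * of_int (y v)" using relation_multiple by blast
  have "z v \<in> \<int>" using z(1) v False by blast
  then obtain m where m: "z v = of_int m" by (elim Ints_cases)
  have ku: "k * of_int (y u) = -1" and kv: "k * of_int (y v) = of_int m"
    using k u v False m by (auto simp: t_def)
  have "real_of_int (y v) = - (k * of_int (y u)) * of_int (y v)" using ku by simp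
  also have "\<dots> = - of_int (y u) * (k * of_int (y v))" by (simp add: algebra_simps)
  also have "\<dots> = of_int (y u * (- m))" using kv by simp
  finally have "y v = y u * (- m)" by (simp only: of_int_eq_iff)
  then show ?thesis by (rule dvdI)
qed simp


lemma int_generating_dvd_all:
  assumes gen: "K_generating \<int> V W" and card: "card W + 1 = card V"
  obtains u where "u \<in> V" "\<And>v. v \<in> V \<Longrightarrow> y u dvd y v"
proof -
  have "W \<subseteq> V" using gen by (simp add: K_generating_def)
  then have "card (V - W) = 1" using card finite by (simp add: card_Diff_subset finite_subset)
  then obtain u where u: "V - W = {u}" by (rule card_1_singletonE)
  then have "W = V - {u}" "u \<in> V" using \<open>W \<subseteq> V\<close> by blast+
  then show ?thesis using that gen int_generating_remove_dvd by blast
qed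

lemma relation_functional_factors:
  assumes l: "(\<Sum>v\<in>V. l v * of_int (y v)) = 0"
  shows "\<exists>g. linear g \<and> (\<forall>x. sum x V = 0 \<longrightarrow> (\<Sum>v\<in>V. l v * x v) = g (\<Sum>v\<in>V. x v *\<^sub>R v))"
proof (cases "V = {}")
  case True
  then show ?thesis by (intro exI[of _ "\<lambda>_. 0"]) (simp add: linear_zero)
next
  case False
  then obtain u0 where u0: "u0 \<in> V" by blast
  have "V - {u0} \<noteq> {}"
  proof
    assume "V - {u0} = {}"
    then have "V = {u0}" using u0 by blast
    then show False using relation nonzero[OF u0] by (simp add: affine_relation_def)
  qed
  then obtain w0 where w0: "w0 \<in> V" "w0 \<noteq> u0" by blast
  have "insert w0 (V - {u0} - {w0}) = V - {u0}" using w0 by blast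
  then have "\<not> dependent ((\<lambda>x. - w0 + x) ` (V - {u0} - {w0}))"
    using affine_independent_remove[OF u0] affine_dependent_iff_dependent[of w0 "V - {u0} - {w0}"] by simp
  then obtain g where g: "linear g" "\<forall>z\<in>(\<lambda>x. - w0 + x) ` (V - {u0} - {w0}). g z = l (w0 + z) - l w0"
    using linear_independent_extend[of "(\<lambda>x. - w0 + x) ` (V - {u0} - {w0})" "\<lambda>z. l (w0 + z) - l w0"]
    by blast
  \<comment> \<open>\<open>g\<close> matches \<open>l\<close> on the affine frame \<open>V - {u0}\<close>, so the defect \<open>e\<close> lives at \<open>u0\<close>;
    testing with \<open>y\<close> shows that it vanishes there too.\<close>
  define e where "e v = l v - l w0 - g (v - w0)" for v
  have e_zero: "e v = 0" if "v \<in> V" "v \<noteq> u0" for v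
    using g that by (cases "v = w0") (auto simp: e_def linear_0)
  have defect: "(\<Sum>v\<in>V. l v * x v) - g (\<Sum>v\<in>V. x v *\<^sub>R v) = x u0 * e u0" if x: "sum x V = 0" for x
  proof -
    have "g (\<Sum>v\<in>V. x v *\<^sub>R v) = g (\<Sum>v\<in>V. x v *\<^sub>R (v - w0))"
      using x by (simp add: scaleR_diff_right sum_subtractf flip: scaleR_sum_left)
    also have "\<dots> = (\<Sum>v\<in>V. x v * g (v - w0))"
      using g(1) by (simp add: linear_sum linear_scale)
    moreover have "(\<Sum>v\<in>V. x v * e v) = (\<Sum>v\<in>V. l v * x v) - l w0 * sum x V - (\<Sum>v\<in>V. x v * g (v - w0))"
      by (simp add: e_def algebra_simps sum_subtractf sum_distrib_left sum.distrib)
    ultimately have "(\<Sum>v\<in>V. l v * x v) - g (\<Sum>v\<in>V. x v *\<^sub>R v) = (\<Sum>v\<in>V. x v * e v)"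
      using x by simp
    also have "\<dots> = x u0 * e u0"
      using finite u0 e_zero by (simp add: sum.remove[of V u0])
    finally show ?thesis .
  qed
  have "of_int (y u0) * e u0 = 0"
    using defect[of "\<lambda>v. of_int (y v)"] relation l linear_0[OF g(1)] by (simp add: affine_relation_def mult.commute)
  then have "e u0 = 0" using nonzero[OF u0] by simp
  then show ?thesis using defect g(1) by (intro exI[of _ g]) simp
qed

end

lemma affine_circuitI:
  assumes "finite V" "W \<subseteq> V" "\<not> affine_dependent W" "card W + 1 = card V"
    and "affine_relation V (\<lambda>v. of_int (y v))" "\<And>v. v \<in> V \<Longrightarrow> y v \<noteq> 0" "\<And>v. v \<notin> V \<Longrightarrow> y v = 0"
  shows "affine_circuit V y"
proof
  have "card (V - W) = 1" using assms(1,2,4) by (simp add: card_Diff_subset finite_subset)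
  then obtain u0 where "V - W = {u0}" by (rule card_1_singletonE)
  then have V: "V = insert u0 W" "u0 \<notin> W" "u0 \<in> V" using assms(2) by blast+
  fix t assume "affine_relation V t"
  then show "\<exists>k. \<forall>v\<in>V. t v = k * of_int (y v)"
    using affine_relation_multiple_of_insert[OF finite_subset[OF assms(2,1)] V(2) assms(3), of "\<lambda>v. of_int (y v)" t]
      assms(5) assms(6)[OF V(3)]
    unfolding V(1)[symmetric] by simp
qed (use assms in auto)

lemma affine_circuit_affine_basis_remove:
  fixes V :: "'a::euclidean_space set"
  assumes "affine_circuit V y" "card V = DIM('a) + 2" "u \<in> V"
  shows "K_affine_basis UNIV V (V - {u})"
  using affine_circuit.generating_remove[OF assms(1,3)] affine_circuit.finite[OF assms(1)] assms(2,3)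
  by (simp add: K_affine_basis_def)

lemma affine_circuit_not_int_basic:
  fixes V :: "'a::euclidean_space set"
  assumes "affine_circuit V y" "card V = DIM('a) + 2" and not_dvd: "\<And>u. u \<in> V \<Longrightarrow> \<exists>v\<in>V. \<not> y u dvd y v"
  shows "\<not> K_basic \<int> V"
proof
  assume "K_basic \<int> V"
  then obtain W where "K_generating \<int> V W" "card W + 1 = card V"
    using assms(2) by (auto simp: K_basic_def K_affine_basis_def)
  then obtain u where "u \<in> V" "\<And>v. v \<in> V \<Longrightarrow> y u dvd y v"
    by (rule affine_circuit.int_generating_dvd_all[OF assms(1)]) blast
  then show False using not_dvd by blast
qed

section \<open>Hypermetric forms and the faces of the hypermetric cone\<close>

definition pair_form :: "'a set \<Rightarrow> ('a \<times> 'a \<Rightarrow> real) \<Rightarrow> ('a \<Rightarrow> real) \<Rightarrow> real" where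
  "pair_form V h b = (\<Sum>u\<in>V. \<Sum>v\<in>V. b u * b v * h (u, v))"

definition hollow_sym :: "'a set \<Rightarrow> ('a \<times> 'a \<Rightarrow> real) \<Rightarrow> bool" where
  "hollow_sym V h \<longleftrightarrow> (\<forall>u v. (u \<notin> V \<or> v \<notin> V) \<longrightarrow> h (u, v) = 0) \<and>
      (\<forall>u v. h (u, v) = h (v, u)) \<and> (\<forall>v. h (v, v) = 0)"

lemma pair_form_lincomb:
  "pair_form V (\<lambda>x. \<alpha> * f x + \<beta> * g x) b = \<alpha> * pair_form V f b + \<beta> * pair_form V g b"
  by (simp add: pair_form_def sum_distrib_left sum.distrib algebra_simps)

lemma hollow_sym_lincomb:
  "hollow_sym V f \<Longrightarrow> hollow_sym V g \<Longrightarrow> hollow_sym V (\<lambda>x. \<alpha> * f x + \<beta> * g x)"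
  by (simp add: hollow_sym_def)

lemma sum_unit_mult:
  assumes "finite V" "w \<in> V"
  shows "(\<Sum>v\<in>V. (if v = w then 1 else 0) * f v) = (f w :: real)"
proof -
  have "(\<Sum>v\<in>V. (if v = w then 1 else 0) * f v) = (\<Sum>v\<in>V. if v = w then f v else 0)"
    by (intro sum.cong) auto
  then show ?thesis using assms by (simp add: sum.delta')
qed

lemma pair_form_unit_shift:
  assumes "finite V" "hollow_sym V h" "w \<in> V"
  shows "pair_form V h (\<lambda>v. (if v = w then 1 else 0) + k * t v)
       = 2 * k * (\<Sum>v\<in>V. t v * h (w, v)) + k\<^sup>2 * pair_form V h t"
proof -
  let ?e = "\<lambda>v. if v = w then 1 else (0::real)"
  have sym: "h (u, v) = h (v, u)" and diag: "h (v, v) = 0" for u v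
    using assms(2) by (auto simp: hollow_sym_def)
  have "pair_form V h (\<lambda>v. ?e v + k * t v)
      = (\<Sum>u\<in>V. \<Sum>v\<in>V. ?e u * (?e v * h (u, v)) + k * (?e u * (t v * h (u, v)))
                          + k * (?e v * (t u * h (u, v))) + k\<^sup>2 * (t u * t v * h (u, v)))"
    unfolding pair_form_def by (intro sum.cong refl) (simp add: algebra_simps power2_eq_square)
  also have "\<dots> = (\<Sum>u\<in>V. ?e u * (\<Sum>v\<in>V. ?e v * h (u, v))) + k * (\<Sum>u\<in>V. ?e u * (\<Sum>v\<in>V. t v * h (u, v)))
                  + k * (\<Sum>u\<in>V. \<Sum>v\<in>V. ?e v * (t u * h (u, v))) + k\<^sup>2 * pair_form V h t"
    by (simp add: sum.distrib sum_distrib_left pair_form_def)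
  also have "(\<Sum>u\<in>V. ?e u * (\<Sum>v\<in>V. ?e v * h (u, v))) = 0"
    using assms(1,3) diag by (simp add: sum_unit_mult)
  also have "(\<Sum>u\<in>V. ?e u * (\<Sum>v\<in>V. t v * h (u, v))) = (\<Sum>v\<in>V. t v * h (w, v))"
    using assms(1,3) by (rule sum_unit_mult)
  also have "(\<Sum>u\<in>V. \<Sum>v\<in>V. ?e v * (t u * h (u, v))) = (\<Sum>v\<in>V. t v * h (w, v))"
    using assms(1,3) by (simp add: sum_unit_mult sym[of _ w])
  finally show ?thesis by simp
qed

lemma mem_HYP_iff:
  "h \<in> HYP V \<longleftrightarrow> hollow_sym V h \<and>
     (\<forall>b::'a \<Rightarrow> int. sum b V = 1 \<longrightarrow> pair_form V h (\<lambda>v. of_int (b v)) \<le> 0)"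
proof -
  have "pair_form V h (\<lambda>v. of_int (b v)) \<le> 0"
    if "\<forall>b::'a \<Rightarrow> int. (\<forall>v. v \<notin> V \<longrightarrow> b v = 0) \<longrightarrow> sum b V = 1 \<longrightarrow>
          (\<Sum>u\<in>V. \<Sum>v\<in>V. of_int (b u * b v) * h (u, v)) \<le> 0" "sum b V = 1" for b :: "'a \<Rightarrow> int"
    using that(1)[rule_format, of "\<lambda>v. if v \<in> V then b v else 0"] that(2)
    by (simp add: pair_form_def cong: sum.cong)
  then show ?thesis
    unfolding HYP_def hollow_sym_def pair_form_def by (auto simp: mult_ac)
qed

definition tight_face :: "'a set \<Rightarrow> ('a \<times> 'a \<Rightarrow> real) \<Rightarrow> ('a \<times> 'a \<Rightarrow> real) set" where
  "tight_face V d = {h \<in> HYP V. \<forall>b::'a \<Rightarrow> int. sum b V = 1 \<longrightarrow>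
       pair_form V d (\<lambda>v. of_int (b v)) = 0 \<longrightarrow> pair_form V h (\<lambda>v. of_int (b v)) = 0}"

lemma fun_face_of_tight_face: "fun_face_of (tight_face V d) (HYP V)"
  unfolding fun_face_of_def
proof (intro conjI)
  show "\<forall>a\<in>tight_face V d. \<forall>b\<in>tight_face V d. \<forall>t. 0 \<le> t \<and> t \<le> 1 \<longrightarrow>
          (\<lambda>x. (1 - t) * a x + t * b x) \<in> tight_face V d"
    by (simp add: tight_face_def mem_HYP_iff hollow_sym_lincomb pair_form_lincomb
        add_nonpos_nonpos mult_nonneg_nonpos)
next
  show "\<forall>a\<in>HYP V. \<forall>b\<in>HYP V. \<forall>t. 0 < t \<and> t < 1 \<longrightarrow> (\<lambda>x. (1 - t) * a x + t * b x) \<in> tight_face V d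
          \<longrightarrow> a \<in> tight_face V d \<and> b \<in> tight_face V d"
  proof (intro ballI allI impI)
    fix a b and t :: real
    assume a: "a \<in> HYP V" and b: "b \<in> HYP V" and t: "0 < t \<and> t < 1"
      and ab: "(\<lambda>x. (1 - t) * a x + t * b x) \<in> tight_face V d"
    have "pair_form V a (\<lambda>v. of_int (c v)) = 0 \<and> pair_form V b (\<lambda>v. of_int (c v)) = 0"
      if c: "sum c V = 1" "pair_form V d (\<lambda>v. of_int (c v)) = 0" for c :: "'a \<Rightarrow> int"
    proof -
      have "pair_form V a (\<lambda>v. of_int (c v)) \<le> 0" "pair_form V b (\<lambda>v. of_int (c v)) \<le> 0"
        using a b c(1) by (auto simp: mem_HYP_iff)
      then have "(1 - t) * pair_form V a (\<lambda>v. of_int (c v)) \<le> 0" "t * pair_form V b (\<lambda>v. of_int (c v)) \<le> 0"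
        using t by (simp_all add: mult_nonneg_nonpos)
      moreover have "(1 - t) * pair_form V a (\<lambda>v. of_int (c v)) + t * pair_form V b (\<lambda>v. of_int (c v)) = 0"
        using ab c by (auto simp: tight_face_def pair_form_lincomb)
      ultimately have "(1 - t) * pair_form V a (\<lambda>v. of_int (c v)) = 0" "t * pair_form V b (\<lambda>v. of_int (c v)) = 0"
        by linarith+
      then show ?thesis using t by simp
    qed
    then show "a \<in> tight_face V d \<and> b \<in> tight_face V d"
      using a b by (simp add: tight_face_def)
  qed
qed (auto simp: tight_face_def)

lemma min_face_subset_tight_face:
  assumes "d \<in> HYP V"
  shows "min_face (HYP V) d \<subseteq> tight_face V d"
  using assms fun_face_of_tight_face[of V d] unfolding min_face_def tight_face_def by blast

lemma perturbation_in_min_face: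
  assumes d: "d \<in> HYP V" and g: "hollow_sym V g"
    and bound: "\<And>b::'a \<Rightarrow> int. sum b V = 1 \<Longrightarrow>
        \<bar>pair_form V g (\<lambda>v. of_int (b v))\<bar> \<le> C * - pair_form V d (\<lambda>v. of_int (b v))"
  shows "\<exists>\<epsilon>>0. (\<lambda>x. d x + \<epsilon> * g x) \<in> min_face (HYP V) d"
proof -
  define \<epsilon> where "\<epsilon> = 1 / (\<bar>C\<bar> + 1)"
  have \<epsilon>: "\<epsilon> > 0" "\<epsilon> * \<bar>C\<bar> \<le> 1" by (simp_all add: \<epsilon>_def field_simps)
  have shifted: "(\<lambda>x. d x + \<sigma> * g x) \<in> HYP V" if \<sigma>: "\<bar>\<sigma>\<bar> \<le> \<epsilon>" for \<sigma>
    unfolding mem_HYP_iff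
  proof (intro conjI allI impI)
    show "hollow_sym V (\<lambda>x. d x + \<sigma> * g x)"
      using hollow_sym_lincomb[of V d g 1 \<sigma>] d g by (simp add: mem_HYP_iff)
    fix b :: "'a \<Rightarrow> int" assume b: "sum b V = 1"
    define q where "q = - pair_form V d (\<lambda>v. of_int (b v))"
    have q: "q \<ge> 0" using d b by (simp add: mem_HYP_iff q_def)
    have "\<bar>pair_form V g (\<lambda>v. of_int (b v))\<bar> \<le> \<bar>C\<bar> * q"
      using bound[OF b] mult_right_mono[OF abs_ge_self[of C] q] by (simp add: q_def)
    then have "\<bar>\<sigma>\<bar> * \<bar>pair_form V g (\<lambda>v. of_int (b v))\<bar> \<le> \<epsilon> * (\<bar>C\<bar> * q)"
      using \<sigma> by (intro mult_mono) auto
    also have "\<dots> \<le> 1 * q"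
      using mult_right_mono[OF \<epsilon>(2) q] by (simp add: mult.assoc)
    finally have "\<sigma> * pair_form V g (\<lambda>v. of_int (b v)) \<le> q"
      using abs_ge_self[of "\<sigma> * pair_form V g (\<lambda>v. of_int (b v))"] by (simp add: abs_mult)
    then show "pair_form V (\<lambda>x. d x + \<sigma> * g x) (\<lambda>v. of_int (b v)) \<le> 0"
      using pair_form_lincomb[of V 1 d \<sigma> g] by (simp add: q_def)
  qed
  have "(\<lambda>x. d x + \<epsilon> * g x) \<in> F" if F: "fun_face_of F (HYP V)" "d \<in> F" for F
  proof -
    have mid: "(\<lambda>x. (1 - 1/2) * (d x + (- \<epsilon>) * g x) + 1/2 * (d x + \<epsilon> * g x)) \<in> F"
      using F(2) by (simp add: algebra_simps)
    have "(\<lambda>x. d x + (- \<epsilon>) * g x) \<in> HYP V" "(\<lambda>x. d x + \<epsilon> * g x) \<in> HYP V"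
      using shifted[of "- \<epsilon>"] shifted[of \<epsilon>] \<epsilon>(1) by auto
    from F(1)[unfolded fun_face_of_def, THEN conjunct2, THEN conjunct2, rule_format, OF this, of "1/2"] mid
    show ?thesis by simp
  qed
  then show ?thesis using \<epsilon>(1) unfolding min_face_def by blast
qed

lemma fun_dim_eqI:
  assumes "f0 \<in> F" and diff: "\<And>f g. f \<in> F \<Longrightarrow> g \<in> F \<Longrightarrow> (\<lambda>x. f x - g x) \<in> S"
    and bound: "\<And>D. D \<subseteq> S \<Longrightarrow> fun_lin_indep D \<Longrightarrow> card D \<le> n"
    and D: "D \<subseteq> (\<lambda>f x. f x - f0 x) ` F" "fun_lin_indep D" "card D = n"
  shows "fun_dim F = n"
proof -
  let ?S = "{card D | D. \<exists>f0\<in>F. D \<subseteq> (\<lambda>f x. f x - f0 x) ` F \<and> fun_lin_indep D}"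
  have le: "m \<le> n" if m: "m \<in> ?S" for m
  proof -
    obtain D' f0' where D': "m = card D'" "f0' \<in> F" "D' \<subseteq> (\<lambda>f x. f x - f0' x) ` F" "fun_lin_indep D'"
      using m by blast
    then have "D' \<subseteq> S" using diff by blast
    then show ?thesis using bound D' by simp
  qed
  have "?S \<subseteq> {..n}" using le by blast
  then have "finite ?S" by (rule finite_subset) simp
  moreover have "n \<in> ?S" using D assms(1) by blast
  ultimately show ?thesis unfolding fun_dim_def using le by (intro Max_eqI) auto
qed

section \<open>Balanced forms and a basis for them\<close>

definition balanced_forms :: "'a set \<Rightarrow> ('a \<Rightarrow> real) \<Rightarrow> ('a \<times> 'a \<Rightarrow> real) set" where
  "balanced_forms V w = {g. hollow_sym V g \<and> (\<forall>u\<in>V. (\<Sum>v\<in>V. w v * g (u, v)) = 0)}"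

interpretation fun_space: vector_space "\<lambda>(c::real) (f::'x \<Rightarrow> real) x. c * f x"
  by unfold_locales (auto simp: fun_eq_iff algebra_simps)

lemma sum_fun_apply: "(sum f A) x = (\<Sum>i\<in>A. f i x :: real)"
  by (induction A rule: infinite_finite_induct) (auto simp: plus_fun_def zero_fun_def)

lemma fun_lin_indep_imp_independent:
  fixes D :: "('x \<Rightarrow> real) set"
  assumes "fun_lin_indep D"
  shows "\<not> fun_space.dependent D"
proof
  assume "fun_space.dependent D"
  then obtain t u where tu: "finite t" "t \<subseteq> D" "(\<Sum>v\<in>t. (\<lambda>x. u v * v x)) = 0" "\<exists>v\<in>t. u v \<noteq> 0"
    unfolding fun_space.dependent_explicit by blast
  define c where "c g = (if g \<in> t then u g else 0)" for g
  have "(\<Sum>g\<in>D. c g * g x) = 0" for x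
  proof -
    have "(\<Sum>g\<in>D. c g * g x) = (\<Sum>g\<in>t. u g * g x)"
      using assms tu(2) by (intro sum.mono_neutral_cong_right) (auto simp: c_def fun_lin_indep_def)
    also have "\<dots> = 0" using tu(3) sum_fun_apply[of "\<lambda>v x. u v * v x" t x] by simp
    finally show ?thesis .
  qed
  then have "\<forall>g\<in>D. c g = 0" using assms unfolding fun_lin_indep_def by blast
  moreover obtain v where "v \<in> t" "u v \<noteq> 0" using tu(4) by blast
  ultimately have "c v = 0" "v \<in> t" "u v \<noteq> 0" using tu(2) by blast+
  then show False by (simp add: c_def)
qed

lemma balanced_forms_subspace: "fun_space.subspace (balanced_forms V w)"
  unfolding fun_space.subspace_def balanced_forms_def hollow_sym_def
  by (simp add: sum.distrib algebra_simps flip: sum_distrib_left)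

lemma pair_form_cong:
  "(\<And>v. v \<in> V \<Longrightarrow> b v = b' v) \<Longrightarrow> pair_form V h b = pair_form V h b'"
  by (simp add: pair_form_def)

lemma pair_form_balanced_unit_shift:
  assumes "finite V" "g \<in> balanced_forms V w" "u \<in> V"
  shows "pair_form V g (\<lambda>v. (if v = u then 1 else 0) + k * w v) = 0"
proof -
  have rows: "\<And>a. a \<in> V \<Longrightarrow> (\<Sum>v\<in>V. w v * g (a, v)) = 0" and "hollow_sym V g"
    using assms(2) by (auto simp: balanced_forms_def)
  moreover have "pair_form V g w = 0"
    using rows by (simp add: pair_form_def mult.assoc flip: sum_distrib_left)
  ultimately show ?thesis using assms(1,3) by (simp add: pair_form_unit_shift)
qed

lemma sum_sum_zero_row_sums:
  fixes G :: "'a \<times> 'a \<Rightarrow> real" and \<beta> :: "'a \<Rightarrow> real"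
  assumes sym: "\<And>u v. G (u, v) = G (v, u)" and rows: "\<And>u. u \<in> V \<Longrightarrow> (\<Sum>v\<in>V. G (u, v)) = 0"
  shows "(\<Sum>u\<in>V. \<Sum>v\<in>V. \<beta> u * \<beta> v * G (u, v)) = - (\<Sum>u\<in>V. \<Sum>v\<in>V. G (u, v) * (\<beta> u - \<beta> v)\<^sup>2) / 2"
proof -
  have "(\<Sum>v\<in>V. G (u, v) * (\<beta> u)\<^sup>2) = 0" if "u \<in> V" for u
    using rows[OF that] sum_distrib_right[of "\<lambda>v. G (u, v)" V "(\<beta> u)\<^sup>2"] by simp
  then have left: "(\<Sum>u\<in>V. \<Sum>v\<in>V. G (u, v) * (\<beta> u)\<^sup>2) = 0"
    by simp
  have "(\<Sum>u\<in>V. \<Sum>v\<in>V. G (u, v) * (\<beta> v)\<^sup>2) = (\<Sum>v\<in>V. \<Sum>u\<in>V. G (v, u) * (\<beta> v)\<^sup>2)"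
    by (subst sum.swap) (simp add: sym)
  then have right: "(\<Sum>u\<in>V. \<Sum>v\<in>V. G (u, v) * (\<beta> v)\<^sup>2) = 0"
    using left by simp
  have "(\<Sum>u\<in>V. \<Sum>v\<in>V. G (u, v) * (\<beta> u - \<beta> v)\<^sup>2)
      = (\<Sum>u\<in>V. \<Sum>v\<in>V. G (u, v) * (\<beta> u)\<^sup>2) + (\<Sum>u\<in>V. \<Sum>v\<in>V. G (u, v) * (\<beta> v)\<^sup>2)
        - 2 * (\<Sum>u\<in>V. \<Sum>v\<in>V. \<beta> u * \<beta> v * G (u, v))"
    by (simp add: power2_diff algebra_simps sum.distrib sum_subtractf sum_distrib_left)
  then show ?thesis using left right by simp
qed

lemma pair_form_balanced_abs_le:
  assumes g: "g \<in> balanced_forms V w" and w: "\<And>v. v \<in> V \<Longrightarrow> w v \<noteq> 0"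
    and D: "\<And>u v. u \<in> V \<Longrightarrow> v \<in> V \<Longrightarrow> (b u / w u - b v / w v)\<^sup>2 \<le> D"
  shows "\<bar>pair_form V g b\<bar> \<le> (\<Sum>u\<in>V. \<Sum>v\<in>V. \<bar>w u * w v * g (u, v)\<bar>) / 2 * D"
proof -
  define G where "G x = w (fst x) * w (snd x) * g x" for x
  define \<beta> where "\<beta> v = b v / w v" for v
  have G_sym: "G (u, v) = G (v, u)" for u v
    using g by (simp add: G_def balanced_forms_def hollow_sym_def mult_ac)
  have G_rows: "(\<Sum>v\<in>V. G (u, v)) = 0" if "u \<in> V" for u
    using g that by (simp add: G_def balanced_forms_def mult.assoc flip: sum_distrib_left)
  have "pair_form V g b = (\<Sum>u\<in>V. \<Sum>v\<in>V. \<beta> u * \<beta> v * G (u, v))"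
    unfolding pair_form_def using w by (intro sum.cong refl) (simp add: \<beta>_def G_def)
  also have "\<dots> = - (\<Sum>u\<in>V. \<Sum>v\<in>V. G (u, v) * (\<beta> u - \<beta> v)\<^sup>2) / 2"
    using G_sym G_rows by (rule sum_sum_zero_row_sums)
  finally have "\<bar>pair_form V g b\<bar> = \<bar>\<Sum>u\<in>V. \<Sum>v\<in>V. G (u, v) * (\<beta> u - \<beta> v)\<^sup>2\<bar> / 2" by simp
  also have "\<dots> \<le> (\<Sum>u\<in>V. \<Sum>v\<in>V. \<bar>G (u, v)\<bar> * (\<beta> u - \<beta> v)\<^sup>2) / 2"
    by (intro divide_right_mono order_trans[OF sum_abs sum_mono[OF order_trans[OF sum_abs]]])
      (simp_all add: abs_mult)
  also have "\<dots> \<le> (\<Sum>u\<in>V. \<Sum>v\<in>V. \<bar>G (u, v)\<bar> * D) / 2"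
    using D by (intro divide_right_mono sum_mono mult_left_mono) (auto simp: \<beta>_def)
  also have "\<dots> = (\<Sum>u\<in>V. \<Sum>v\<in>V. \<bar>w u * w v * g (u, v)\<bar>) / 2 * D"
    by (simp only: sum_distrib_right[symmetric]) (simp add: G_def)
  finally show ?thesis .
qed

definition pair_ind :: "'a set \<Rightarrow> 'a \<times> 'a \<Rightarrow> real" where
  "pair_ind B x = (if {fst x, snd x} = B then 1 else 0)"

lemma pair_ind_sym: "pair_ind B (u, v) = pair_ind B (v, u)"
  by (simp add: pair_ind_def insert_commute)

lemma pair_ind_diag: "s \<noteq> t \<Longrightarrow> pair_ind {s, t} (v, v) = 0"
  by (auto simp: pair_ind_def doubleton_eq_iff)

lemma sum_pair_ind_row:
  assumes "finite V" "s \<in> V" "t \<in> V" "s \<noteq> t"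
  shows "(\<Sum>v\<in>V. pair_ind {s, t} (u, v)) = (if u = s then 1 else 0) + (if u = t then 1 else 0)"
proof -
  have "(\<Sum>v\<in>V. pair_ind {s, t} (u, v))
      = (\<Sum>v\<in>V. (if u = s then 1 else 0) * (if v = t then 1 else 0) + (if u = t then 1 else 0) * (if v = s then 1 else 0))"
    using assms(4) by (intro sum.cong refl) (auto simp: pair_ind_def doubleton_eq_iff)
  also have "\<dots> = (if u = s then 1 else 0) + (if u = t then 1 else 0)"
    using assms by (simp add: sum.distrib sum.delta' flip: sum_distrib_left)
  finally show ?thesis .
qed

lemma odd_triangle_zero:
  fixes w0 w1 w2 X Y Z :: real
  assumes "w0 \<noteq> 0" "w1 \<noteq> 0" "w2 \<noteq> 0"
    and "w0 * X + w2 * Z = 0" "w0 * Y + w1 * Z = 0" "w1 * X + w2 * Y = 0"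
  shows "X = 0 \<and> Y = 0 \<and> Z = 0"
proof -
  have "2 * (w1 * w2) * Z = w1 * (w0 * X + w2 * Z) + w2 * (w0 * Y + w1 * Z) - w0 * (w1 * X + w2 * Y)"
    by (simp add: algebra_simps)
  then have "Z = 0" using assms by simp
  then show ?thesis using assms by simp
qed

text \<open>The pairs outside \<open>free_pairs\<close> are the edges at \<open>p0\<close> and the edge \<open>{p1, p2}\<close>; as the
  triangle \<open>p0 p1 p2\<close> is odd, the row conditions of a balanced form determine its values there.
  The form \<open>basis_form B\<close> is the edge \<open>B\<close> corrected along this graph so that all row sums
  vanish, then rescaled by the weights.\<close>

locale weighted_triangle =
  fixes V :: "'a set" and w :: "'a \<Rightarrow> real" and p0 p1 p2 :: 'a
  assumes finite: "finite V" and nonzero: "\<And>v. v \<in> V \<Longrightarrow> w v \<noteq> 0"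
    and p_in: "p0 \<in> V" "p1 \<in> V" "p2 \<in> V"
    and p_distinct: "p0 \<noteq> p1" "p0 \<noteq> p2" "p1 \<noteq> p2"
begin

definition free_pairs :: "'a set set" where
  "free_pairs = {B. B \<subseteq> V - {p0} \<and> card B = 2} - {{p1, p2}}"

definition basis_form :: "'a set \<Rightarrow> 'a \<times> 'a \<Rightarrow> real" where
  "basis_form B x = (if fst x \<in> V \<and> snd x \<in> V then
      (pair_ind B x - (\<Sum>u\<in>B. pair_ind {p0, u} x) + pair_ind {p0, p1} x + pair_ind {p0, p2} x
        - pair_ind {p1, p2} x) / (w (fst x) * w (snd x)) else 0)"

lemma card_free_pairs: "card free_pairs = ((card V - 1) choose 2) - 1"
proof -
  have "finite (V - {p0})" using finite by simp
  then have "card {B. B \<subseteq> V - {p0} \<and> card B = 2} = (card V - 1) choose 2"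
    using n_subsets[of "V - {p0}" 2] finite p_in by (simp add: card_Diff_singleton)
  moreover have "{p1, p2} \<in> {B. B \<subseteq> V - {p0} \<and> card B = 2}"
    using p_in p_distinct by auto
  ultimately show ?thesis
    using \<open>finite (V - {p0})\<close> by (simp add: free_pairs_def card_Diff_singleton)
qed

lemma finite_free_pairs: "finite free_pairs"
  using finite by (simp add: free_pairs_def)

lemma free_pairsE:
  assumes "B \<in> free_pairs"
  obtains u v where "B = {u, v}" "u \<noteq> v" "u \<in> V" "v \<in> V" "u \<noteq> p0" "v \<noteq> p0" "{u, v} \<noteq> {p1, p2}"
proof -
  have "card B = 2" "B \<subseteq> V - {p0}" "B \<noteq> {p1, p2}" using assms by (auto simp: free_pairs_def)
  then show ?thesis using that by (auto simp: card_2_iff)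
qed

lemma basis_form_pair:
  assumes "u \<noteq> v"
  shows "basis_form {u, v} x = (if fst x \<in> V \<and> snd x \<in> V then
      (pair_ind {u, v} x - pair_ind {p0, u} x - pair_ind {p0, v} x + pair_ind {p0, p1} x + pair_ind {p0, p2} x
        - pair_ind {p1, p2} x) / (w (fst x) * w (snd x)) else 0)"
  using assms by (simp add: basis_form_def)

lemma basis_form_balanced:
  assumes "B \<in> free_pairs"
  shows "basis_form B \<in> balanced_forms V w"
proof -
  obtain u v where uv: "B = {u, v}" "u \<noteq> v" "u \<in> V" "v \<in> V" "u \<noteq> p0" "v \<noteq> p0"
    using free_pairsE[OF assms] by metis
  have "(\<Sum>z\<in>V. w z * basis_form B (a, z)) = 0" if a: "a \<in> V" for a
  proof -
    have "(\<Sum>z\<in>V. w z * basis_form B (a, z))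
        = (\<Sum>z\<in>V. pair_ind {u, v} (a, z) - pair_ind {p0, u} (a, z) - pair_ind {p0, v} (a, z)
             + pair_ind {p0, p1} (a, z) + pair_ind {p0, p2} (a, z) - pair_ind {p1, p2} (a, z)) / w a"
      unfolding sum_divide_distrib uv(1) basis_form_pair[OF uv(2)] using a nonzero
      by (intro sum.cong refl) simp
    also have "\<dots> = 0"
      using a uv finite p_in p_distinct by (simp add: sum.distrib sum_subtractf sum_pair_ind_row)
    finally show ?thesis .
  qed
  moreover have "hollow_sym V (basis_form B)"
    using uv p_distinct unfolding hollow_sym_def uv(1) basis_form_pair[OF uv(2)]
    by (simp add: pair_ind_sym pair_ind_diag mult.commute)
  ultimately show ?thesis by (simp add: balanced_forms_def)
qed

lemma basis_form_at_free_pair: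
  assumes B0: "B0 \<in> free_pairs" "B0 = {x, z}"
  shows "basis_form B (x, z) = (if B = B0 then 1 / (w x * w z) else 0)"
proof -
  have xz: "x \<in> V" "z \<in> V" "x \<noteq> p0" "z \<noteq> p0" "{x, z} \<noteq> {p1, p2}"
    using B0 by (auto simp: free_pairs_def)
  then have "pair_ind {p0, u} (x, z) = 0" "pair_ind {p1, p2} (x, z) = 0" for u
    by (auto simp: pair_ind_def doubleton_eq_iff)
  then show ?thesis using xz B0(2) by (auto simp: basis_form_def pair_ind_def)
qed


lemma balanced_star_zero:
  assumes G: "G \<in> balanced_forms V w"
    and free: "\<And>x z. {x, z} \<in> free_pairs \<Longrightarrow> G (x, z) = 0"
  shows "G (p0, a) = 0" and "G (p1, p2) = 0"
proof -
  have sym: "\<And>u v. G (u, v) = G (v, u)" and diag: "\<And>v. G (v, v) = 0"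
    and row: "\<And>a. a \<in> V \<Longrightarrow> (\<Sum>v\<in>V. w v * G (a, v)) = 0"
    and out: "\<And>u v. u \<notin> V \<or> v \<notin> V \<Longrightarrow> G (u, v) = 0"
    using G by (auto simp: balanced_forms_def hollow_sym_def)
  have off: "G (x, z) = 0" if "x \<in> V" "z \<in> V" "x \<noteq> p0" "z \<noteq> p0" "{x, z} \<noteq> {p1, p2}" for x z
  proof (cases "x = z")
    case False
    then have "{x, z} \<in> free_pairs" using that by (auto simp: free_pairs_def)
    then show ?thesis by (rule free)
  qed (simp add: diag)
  have row_on: "(\<Sum>v\<in>S. w v * G (a, v)) = 0"
    if "a \<in> V" "S \<subseteq> V" "\<And>v. v \<in> V \<Longrightarrow> v \<notin> S \<Longrightarrow> G (a, v) = 0" for a S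
    using row[OF that(1)] sum.mono_neutral_right[OF finite that(2), of "\<lambda>v. w v * G (a, v)"] that(3) by simp
  have spoke: "G (a, p0) = 0" if "a \<in> V" "a \<notin> {p0, p1, p2}" for a
  proof -
    have "(\<Sum>v\<in>{p0}. w v * G (a, v)) = 0"
      using that p_in by (intro row_on) (auto intro!: off simp: doubleton_eq_iff)
    then show ?thesis using nonzero[OF p_in(1)] by simp
  qed
  have off_row: "G (p, v) = 0" if "p \<in> {p1, p2}" "v \<in> V" "v \<notin> {p0, q}" "{p, q} = {p1, p2}" for p q v
  proof (cases "v = p")
    case False
    then have "{p, v} \<noteq> {p1, p2}" using that by (auto simp: doubleton_eq_iff)
    then show ?thesis using off[of p v] that p_in p_distinct by auto
  qed (simp add: diag)
  have "(\<Sum>v\<in>{p0, p2}. w v * G (p1, v)) = 0"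
    using p_in off_row[where p = p1 and q = p2] by (intro row_on) auto
  moreover have "(\<Sum>v\<in>{p0, p1}. w v * G (p2, v)) = 0"
    using p_in off_row[where p = p2 and q = p1] by (intro row_on) (auto simp: insert_commute)
  moreover have "(\<Sum>v\<in>{p1, p2}. w v * G (p0, v)) = 0"
  proof (rule row_on)
    show "G (p0, v) = 0" if "v \<in> V" "v \<notin> {p1, p2}" for v
      using diag[of p0] spoke[of v] sym[of p0 v] that by (cases "v = p0") auto
  qed (use p_in in auto)
  ultimately have "G (p0, p1) = 0 \<and> G (p0, p2) = 0 \<and> G (p1, p2) = 0"
    using p_distinct sym[of p1 p0] sym[of p2 p0] sym[of p2 p1] nonzero p_in
    by (intro odd_triangle_zero[of "w p0" "w p1" "w p2"]) (simp_all add: algebra_simps)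
  then show "G (p1, p2) = 0" by simp
  consider "a \<notin> V" | "a = p0" | "a = p1" | "a = p2" | "a \<in> V" "a \<notin> {p0, p1, p2}" by blast
  then show "G (p0, a) = 0"
    by cases (use out diag \<open>G (p0, p1) = 0 \<and> G (p0, p2) = 0 \<and> _\<close> spoke sym in auto)
qed

lemma balanced_eq_zero:
  assumes G: "G \<in> balanced_forms V w"
    and free: "\<And>x z. {x, z} \<in> free_pairs \<Longrightarrow> G (x, z) = 0"
  shows "G = (\<lambda>_. 0)"
proof -
  have sym: "\<And>u v. G (u, v) = G (v, u)" and out: "\<And>u v. u \<notin> V \<or> v \<notin> V \<Longrightarrow> G (u, v) = 0"
    and diag: "\<And>v. G (v, v) = 0"
    using G by (auto simp: balanced_forms_def hollow_sym_def)
  note star = balanced_star_zero[OF G free]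
  have "G (x, z) = 0" for x z
  proof -
    consider "x \<notin> V \<or> z \<notin> V" | "x = p0" | "z = p0" | "{x, z} = {p1, p2}"
      | "x \<in> V" "z \<in> V" "x \<noteq> p0" "z \<noteq> p0" "{x, z} \<noteq> {p1, p2}" by blast
    then show ?thesis
    proof cases
      case 1
      then show ?thesis by (rule out)
    next
      case 2
      then show ?thesis by (simp add: star)
    next
      case 3
      then show ?thesis using star(1)[of x] sym[of x z] by simp
    next
      case 4
      then show ?thesis using star(2) sym[of p1 p2] by (auto simp: doubleton_eq_iff)
    next
      case 5
      then show ?thesis using diag[of x] free[of x z] by (cases "x = z") (auto simp: free_pairs_def)
    qed
  qed
  then show ?thesis by auto
qed

definition basis_coord :: "('a \<times> 'a \<Rightarrow> real) \<Rightarrow> 'a set \<Rightarrow> real" where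
  "basis_coord g B = (\<Sum>x\<in>B. \<Sum>z\<in>B. g (x, z) * w x * w z) / 2"

lemma balanced_in_span: "balanced_forms V w \<subseteq> fun_space.span (basis_form ` free_pairs)"
proof
  fix g assume g: "g \<in> balanced_forms V w"
  define H where "H = (\<Sum>B\<in>free_pairs. (\<lambda>x. basis_coord g B * basis_form B x))"
  have H_span: "H \<in> fun_space.span (basis_form ` free_pairs)"
    unfolding H_def by (intro fun_space.span_sum fun_space.span_scale fun_space.span_base) simp
  then have "H \<in> balanced_forms V w"
    using fun_space.span_minimal[OF _ balanced_forms_subspace] basis_form_balanced by blast
  then have "g - H \<in> balanced_forms V w"
    using g balanced_forms_subspace fun_space.subspace_diff by blast
  moreover have "(g - H) (x, z) = 0" if B0: "{x, z} \<in> free_pairs" for x z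
  proof -
    have "card {x, z} = 2" "{x, z} \<subseteq> V" using B0 by (auto simp: free_pairs_def)
    then have xz: "x \<noteq> z" "x \<in> V" "z \<in> V" by (auto simp: card_insert_if split: if_splits)
    have "H (x, z) = (\<Sum>B\<in>free_pairs. if B = {x, z} then basis_coord g B / (w x * w z) else 0)"
      unfolding H_def sum_fun_apply
      by (intro sum.cong refl) (simp add: basis_form_at_free_pair[OF B0 refl])
    also have "\<dots> = basis_coord g {x, z} / (w x * w z)"
      using B0 finite_free_pairs by (simp add: sum.delta')
    also have "\<dots> = g (x, z)"
      using g xz nonzero by (simp add: basis_coord_def balanced_forms_def hollow_sym_def)
    finally show ?thesis by simp
  qed
  ultimately have "g - H = (\<lambda>_. 0)" by (rule balanced_eq_zero)
  then have "g = H" by (simp add: fun_eq_iff)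
  then show "g \<in> fun_space.span (basis_form ` free_pairs)" using H_span by simp
qed

lemma card_independent_balanced_le:
  assumes "D \<subseteq> balanced_forms V w" "fun_lin_indep D"
  shows "card D \<le> card free_pairs"
proof -
  have "card D \<le> card (basis_form ` free_pairs)"
    using fun_space.independent_span_bound[OF _ fun_lin_indep_imp_independent[OF assms(2)]]
      assms(1) balanced_in_span finite_free_pairs by blast
  also have "\<dots> \<le> card free_pairs" using finite_free_pairs by (rule card_image_le)
  finally show ?thesis .
qed

lemma scaled_basis_independent:
  assumes e: "\<And>B. B \<in> free_pairs \<Longrightarrow> e B \<noteq> 0"
  defines "D \<equiv> (\<lambda>B x. e B * basis_form B x) ` free_pairs"
  shows "fun_lin_indep D" and "card D = card free_pairs"
proof -
  have eval: "(\<lambda>x. e B * basis_form B x) (x, z) = (if B = B0 then e B / (w x * w z) else 0)"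
    if "B0 \<in> free_pairs" "B0 = {x, z}" for B B0 x z
    using basis_form_at_free_pair[OF that] by simp
  have nz: "e B0 / (w x * w z) \<noteq> 0" if "B0 \<in> free_pairs" "B0 = {x, z}" for B0 x z
    using that e nonzero by (auto simp: free_pairs_def)
  have inj: "inj_on (\<lambda>B x. e B * basis_form B x) free_pairs"
  proof (rule inj_onI)
    fix B1 B2 assume B: "B1 \<in> free_pairs" "B2 \<in> free_pairs" and eq: "(\<lambda>x. e B1 * basis_form B1 x) = (\<lambda>x. e B2 * basis_form B2 x)"
    obtain x z where xz: "B1 = {x, z}" using free_pairsE[OF B(1)] by metis
    show "B1 = B2"
    proof (rule ccontr)
      assume "B1 \<noteq> B2"
      then have "e B2 * basis_form B2 (x, z) = 0" using eval[OF B(1) xz, of B2] by simp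
      moreover have "e B1 * basis_form B1 (x, z) \<noteq> 0" using eval[OF B(1) xz, of B1] nz[OF B(1) xz] by simp
      ultimately show False using fun_cong[OF eq, of "(x, z)"] by simp
    qed
  qed
  then show "card D = card free_pairs" unfolding D_def by (rule card_image)
  show "fun_lin_indep D"
    unfolding fun_lin_indep_def
  proof (intro conjI allI impI ballI)
    show "finite D" unfolding D_def using finite_free_pairs by simp
    fix c g assume c: "\<forall>x. (\<Sum>g\<in>D. c g * g x) = 0" and "g \<in> D"
    then obtain B0 where B0: "B0 \<in> free_pairs" "g = (\<lambda>x. e B0 * basis_form B0 x)" by (auto simp: D_def)
    obtain x z where xz: "B0 = {x, z}" using free_pairsE[OF B0(1)] by metis
    have "0 = (\<Sum>B\<in>free_pairs. c (\<lambda>x. e B * basis_form B x) * (e B * basis_form B (x, z)))"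
      using c[rule_format, of "(x, z)"] by (simp add: D_def sum.reindex[OF inj])
    also have "\<dots> = (\<Sum>B\<in>free_pairs. if B = B0 then c (\<lambda>x. e B * basis_form B x) * (e B / (w x * w z)) else 0)"
      using eval[OF B0(1) xz] by (intro sum.cong refl) simp
    also have "\<dots> = c g * (e B0 / (w x * w z))"
      using B0 finite_free_pairs by (simp add: sum.delta')
    finally show "c g = 0" using nz[OF B0(1) xz] by simp
  qed
qed

end


section \<open>Delaunay polytopes whose vertices form a circuit\<close>

lemma lattice_int_comb:
  assumes lat: "is_lattice L" and "finite S" "S \<subseteq> L"
  shows "(\<Sum>v\<in>S. of_int (b v) *\<^sub>R v) \<in> L"
proof -
  obtain B where B: "L = {(\<Sum>x\<in>B. of_int (z x) *\<^sub>R x) | z. True}"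
    using lat unfolding is_lattice_def by blast
  have zero: "0 \<in> L" unfolding B by (auto intro!: exI[of _ "\<lambda>_. 0"])
  have comb: "of_int k *\<^sub>R p + q \<in> L" if p: "p \<in> L" and q: "q \<in> L" for p q k
  proof -
    obtain z1 z2 where "p = (\<Sum>x\<in>B. of_int (z1 x) *\<^sub>R x)" "q = (\<Sum>x\<in>B. of_int (z2 x) *\<^sub>R x)"
      using p q unfolding B by blast
    then have "of_int k *\<^sub>R p + q = (\<Sum>x\<in>B. of_int (k * z1 x + z2 x) *\<^sub>R x)"
      by (simp add: scaleR_sum_right sum.distrib scaleR_add_left)
    then show ?thesis unfolding B by (intro CollectI exI[of _ "\<lambda>x. k * z1 x + z2 x"]) simp
  qed
  show ?thesis using assms(2,3)
    by (induction S rule: finite_induct) (simp_all add: zero comb)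
qed

lemma vertices_convex_hull_sphere:
  fixes S :: "'a::euclidean_space set"
  assumes "S \<subseteq> sphere c r"
  shows "vertices (convex hull S) = S"
proof
  show "vertices (convex hull S) \<subseteq> S"
    unfolding vertices_def using extreme_point_of_convex_hull by blast
next
  have ball: "convex hull S \<subseteq> cball c r"
    using assms sphere_cball by (intro hull_minimal) (auto simp: convex_cball)
  have "x extreme_point_of (convex hull S)" if x: "x \<in> S" for x
    unfolding extreme_point_of_def
  proof (intro conjI ballI notI)
    show "x \<in> convex hull S" using x by (rule hull_inc)
    fix a b assume "a \<in> convex hull S" "b \<in> convex hull S" "x \<in> open_segment a b"
    then show False
      using dist_decreases_open_segment[of x a b c] ball x assms by fastforce
  qed
  then show "S \<subseteq> vertices (convex hull S)" by (auto simp: vertices_def)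
qed

lemma delaunay_polytopeE:
  fixes L P :: "'a::euclidean_space set"
  assumes "delaunay_polytope L P"
  obtains c r W where "vertices P = L \<inter> sphere c r" "\<And>a. a \<in> L \<Longrightarrow> r\<^sup>2 \<le> (norm (a - c))\<^sup>2"
    "W \<subseteq> vertices P" "\<not> affine_dependent W" "card W = DIM('a) + 1"
proof -
  obtain c r W where "\<forall>a\<in>L. r\<^sup>2 \<le> (norm (a - c))\<^sup>2" "W \<subseteq> L \<inter> sphere c r" "\<not> affine_dependent W"
    "card W = DIM('a) + 1" "P = convex hull (L \<inter> sphere c r)"
    using assms unfolding delaunay_polytope_def by blast
  moreover have "vertices P = L \<inter> sphere c r"
    using vertices_convex_hull_sphere[of "L \<inter> sphere c r" c r] calculation(5) by simp
  ultimately show ?thesis using that by simp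
qed

locale delaunay_circuit = affine_circuit V y
  for V :: "'a::euclidean_space set" and y :: "'a \<Rightarrow> int" +
  fixes L :: "'a set" and c :: 'a and r :: real
  assumes lattice: "is_lattice L"
    and V_eq: "V = L \<inter> sphere c r"
    and empty_sphere: "\<And>a. a \<in> L \<Longrightarrow> r\<^sup>2 \<le> (norm (a - c))\<^sup>2"
    and sq_dist_Ints: "\<And>u v. u \<in> V \<Longrightarrow> v \<in> V \<Longrightarrow> (norm (u - v))\<^sup>2 \<in> \<int>"
begin

abbreviation slack :: "('a \<Rightarrow> int) \<Rightarrow> real" where
  "slack b \<equiv> - pair_form V (dist_fun V) (\<lambda>v. of_int (b v))"

lemma V_sphere: "V \<subseteq> sphere c r"
  using V_eq by blast

lemma pair_form_dist_fun: "pair_form V (dist_fun V) b = (\<Sum>u\<in>V. \<Sum>v\<in>V. b u * b v * (norm (u - v))\<^sup>2)"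
  unfolding pair_form_def dist_fun_def by (intro sum.cong refl) simp

lemma pair_form_dist_fun_affine:
  assumes "sum b V = 1"
  shows "pair_form V (dist_fun V) b = 2 * r\<^sup>2 - 2 * (norm ((\<Sum>v\<in>V. b v *\<^sub>R v) - c))\<^sup>2"
  using sum_sum_mult_norm_diff_sq_sphere[OF V_sphere assms] by (simp add: pair_form_dist_fun)

lemma int_comb_in_lattice: "(\<Sum>v\<in>V. of_int (b v) *\<^sub>R v) \<in> L"
  using lattice_int_comb[OF lattice finite] V_eq by blast

lemma dist_fun_HYP: "dist_fun V \<in> HYP V"
  unfolding mem_HYP_iff
proof (intro conjI allI impI)
  show "hollow_sym V (dist_fun V)"
    by (auto simp: hollow_sym_def dist_fun_def norm_minus_commute)
  fix b :: "'a \<Rightarrow> int" assume "sum b V = 1"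
  then have "sum (\<lambda>v. real_of_int (b v)) V = 1" by (metis of_int_1 of_int_sum)
  then show "pair_form V (dist_fun V) (\<lambda>v. of_int (b v)) \<le> 0"
    using pair_form_dist_fun_affine empty_sphere[OF int_comb_in_lattice] by simp
qed

lemma tight_decompE:
  assumes b: "sum b V = 1" and tight: "slack b = 0"
  obtains w k where "w \<in> V" "\<And>v. v \<in> V \<Longrightarrow> real_of_int (b v) = (if v = w then 1 else 0) + k * of_int (y v)"
proof -
  have b1: "sum (\<lambda>v. real_of_int (b v)) V = 1" using b by (metis of_int_1 of_int_sum)
  define P where "P = (\<Sum>v\<in>V. of_int (b v) *\<^sub>R v)"
  have "(norm (P - c))\<^sup>2 = r\<^sup>2" using pair_form_dist_fun_affine[OF b1] tight by (simp add: P_def)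
  moreover have "r \<ge> 0"
  proof -
    obtain v where "v \<in> V" using b by fastforce
    then show ?thesis using V_sphere by (metis mem_sphere subsetD zero_le_dist)
  qed
  ultimately have "P \<in> V" using int_comb_in_lattice V_eq by (simp add: P_def dist_norm norm_minus_commute)
  define t where "t v = real_of_int (b v) - (if v = P then 1 else 0)" for v
  have "affine_relation V t"
    using b1 \<open>P \<in> V\<close> finite
    by (simp add: affine_relation_def t_def sum_subtractf scaleR_diff_left if_distrib[of "\<lambda>a. a *\<^sub>R _"]
        P_def cong: if_cong)
  then obtain k where "\<forall>v\<in>V. t v = k * of_int (y v)" using relation_multiple by blast
  then show ?thesis using that[OF \<open>P \<in> V\<close>, of k] by (simp add: t_def algebra_simps)
qed

lemma slack_ge_one:
  assumes "sum b V = 1" and "slack b \<noteq> 0"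
  shows "slack b \<ge> 1"
proof -
  have "pair_form V (dist_fun V) (\<lambda>v. of_int (b v)) \<in> \<int>"
    unfolding pair_form_dist_fun using sq_dist_Ints by (intro Ints_sum Ints_mult) auto
  then obtain m where m: "pair_form V (dist_fun V) (\<lambda>v. of_int (b v)) = of_int m" by (elim Ints_cases)
  have "pair_form V (dist_fun V) (\<lambda>v. of_int (b v)) \<le> 0"
    using dist_fun_HYP assms(1) by (simp add: mem_HYP_iff)
  then show ?thesis using assms(2) unfolding m by simp
qed

lemma slack_unit_shift:
  assumes "u \<in> V"
  shows "sum (\<lambda>v. (if v = u then 1 else 0) + j * y v) V = 1"
    and "slack (\<lambda>v. (if v = u then 1 else 0) + j * y v) = 0"
proof -
  show b1: "sum (\<lambda>v. (if v = u then 1 else 0) + j * y v) V = 1"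
    using assms finite sum_y by (simp add: sum.distrib flip: sum_distrib_left)
  have "(\<Sum>v\<in>V. real_of_int ((if v = u then 1 else 0) + j * y v) *\<^sub>R v)
      = (\<Sum>v\<in>V. (if v = u then v else 0)) + of_int j *\<^sub>R (\<Sum>v\<in>V. of_int (y v) *\<^sub>R v)"
    unfolding scaleR_sum_right sum.distrib[symmetric] by (intro sum.cong refl) (auto simp: scaleR_add_left)
  also have "\<dots> = u" using assms finite relation by (simp add: affine_relation_def sum.delta')
  moreover have "sum (\<lambda>v. real_of_int ((if v = u then 1 else 0) + j * y v)) V = 1"
    using b1 by (metis of_int_1 of_int_sum)
  moreover have "norm (u - c) = r" using V_sphere assms by (auto simp: dist_norm norm_minus_commute)
  ultimately show "slack (\<lambda>v. (if v = u then 1 else 0) + j * y v) = 0"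
    using pair_form_dist_fun_affine by simp
qed

lemma tight_face_rows:
  assumes h: "h \<in> tight_face V (dist_fun V)" and u: "u \<in> V"
  shows "(\<Sum>v\<in>V. of_int (y v) * h (u, v)) = 0"
proof -
  have hs: "hollow_sym V h" using h by (simp add: tight_face_def mem_HYP_iff)
  have tight: "\<And>b::'a \<Rightarrow> int. sum b V = 1 \<Longrightarrow> slack b = 0 \<Longrightarrow> pair_form V h (\<lambda>v. of_int (b v)) = 0"
    using h by (simp add: tight_face_def)
  have "pair_form V h (\<lambda>v. (if v = u then 1 else 0) + of_int j * of_int (y v)) = 0" for j :: int
  proof -
    have "pair_form V h (\<lambda>v. of_int ((if v = u then 1 else 0) + j * y v)) = 0"
      using tight[OF slack_unit_shift[OF u]] .
    moreover have "(\<lambda>v. real_of_int ((if v = u then 1 else 0) + j * y v))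
        = (\<lambda>v. (if v = u then 1 else 0) + of_int j * of_int (y v))"
      by (auto simp: fun_eq_iff)
    ultimately show ?thesis by simp
  qed
  from this[of 1] this[of "-1"] show ?thesis
    unfolding pair_form_unit_shift[OF finite hs u] by simp
qed

lemma tight_face_diff_balanced:
  assumes "h \<in> tight_face V (dist_fun V)" "h' \<in> tight_face V (dist_fun V)"
  shows "(\<lambda>x. h x - h' x) \<in> balanced_forms V (\<lambda>v. of_int (y v))"
proof -
  have "hollow_sym V h" "hollow_sym V h'"
    using assms by (simp_all add: tight_face_def mem_HYP_iff)
  then have "hollow_sym V (\<lambda>x. 1 * h x + (- 1) * h' x)" by (rule hollow_sym_lincomb)
  then show ?thesis
    using tight_face_rows[OF assms(1)] tight_face_rows[OF assms(2)]
    by (simp add: balanced_forms_def right_diff_distrib sum_subtractf)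
qed


lemma dist_vertex_sq_le_slack:
  assumes b: "sum b V = 1" and t: "t \<in> V"
  shows "(norm ((\<Sum>v\<in>V. of_int (b v) *\<^sub>R v) - t))\<^sup>2 \<le> 4 * r\<^sup>2 + slack b"
proof -
  define P where "P = (\<Sum>v\<in>V. of_int (b v) *\<^sub>R v)"
  have "sum (\<lambda>v. real_of_int (b v)) V = 1" using b by (metis of_int_1 of_int_sum)
  then have P_c: "(norm (P - c))\<^sup>2 = r\<^sup>2 + slack b / 2"
    using pair_form_dist_fun_affine by (simp add: P_def field_simps)
  have t_c: "norm (t - c) = r" using V_sphere t by (auto simp: dist_norm norm_minus_commute)
  have "norm (P - t) \<le> norm (P - c) + norm (t - c)"
    using norm_triangle_ineq4[of "P - c" "t - c"] by simp
  then have "(norm (P - t))\<^sup>2 \<le> (norm (P - c) + norm (t - c))\<^sup>2" by (simp add: power_mono)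
  also have "\<dots> \<le> 2 * (norm (P - c))\<^sup>2 + 2 * (norm (t - c))\<^sup>2" by (rule square_add_le)
  also have "\<dots> = 4 * r\<^sup>2 + slack b" using P_c t_c by simp
  finally show ?thesis by (simp add: P_def)
qed

lemma functional_sq_le_slack:
  assumes l: "(\<Sum>v\<in>V. l v * of_int (y v)) = 0"
  obtains C where "\<And>b. sum b V = 1 \<Longrightarrow> slack b \<ge> 1 \<Longrightarrow> (\<Sum>v\<in>V. l v * of_int (b v))\<^sup>2 \<le> C * slack b"
proof (cases "V = {}")
  case True
  then show ?thesis using that[of 0] by simp
next
  case False
  then obtain t where t: "t \<in> V" by blast
  obtain g where g: "linear g" "\<And>x. sum x V = 0 \<Longrightarrow> (\<Sum>v\<in>V. l v * x v) = g (\<Sum>v\<in>V. x v *\<^sub>R v)"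
    using relation_functional_factors[OF l] by blast
  obtain K where K: "K > 0" "\<And>z. norm (g z) \<le> K * norm z"
    using linear_bounded_pos[OF g(1)] by blast
  show ?thesis
  proof (rule that[of "2 * K\<^sup>2 * (4 * r\<^sup>2 + 1) + 2 * (l t)\<^sup>2"])
    fix b :: "'a \<Rightarrow> int" assume b: "sum b V = 1" and q: "slack b \<ge> 1"
    define P where "P = (\<Sum>v\<in>V. of_int (b v) *\<^sub>R v)"
    define x where "x v = real_of_int (b v) - (if v = t then 1 else 0)" for v
    have "sum x V = 0"
      using b t finite by (simp add: x_def sum_subtractf flip: of_int_sum)
    moreover have "(\<Sum>v\<in>V. x v *\<^sub>R v) = P - t"
      using t finite by (simp add: x_def P_def scaleR_diff_left sum_subtractf if_distrib[of "\<lambda>a. a *\<^sub>R _"] cong: if_cong)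
    moreover have "(\<Sum>v\<in>V. l v * of_int (b v)) = (\<Sum>v\<in>V. l v * x v) + l t"
      using t finite by (simp add: x_def algebra_simps sum_subtractf if_distrib[of "\<lambda>a. _ * a"] cong: if_cong)
    ultimately have eq: "(\<Sum>v\<in>V. l v * of_int (b v)) = g (P - t) + l t"
      using g(2) by simp
    have Pt: "(norm (P - t))\<^sup>2 \<le> 4 * r\<^sup>2 + slack b"
      unfolding P_def using b t by (rule dist_vertex_sq_le_slack)
    have "(g (P - t))\<^sup>2 \<le> (K * norm (P - t))\<^sup>2"
      using K(2)[of "P - t"] by (metis abs_ge_zero power2_abs power_mono real_norm_def)
    also have "\<dots> \<le> K\<^sup>2 * (4 * r\<^sup>2 + slack b)"
      unfolding power_mult_distrib using Pt by (rule mult_left_mono) simp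
    finally have "(g (P - t))\<^sup>2 \<le> K\<^sup>2 * (4 * r\<^sup>2 + slack b)" .
    then have "(\<Sum>v\<in>V. l v * of_int (b v))\<^sup>2 \<le> 2 * (K\<^sup>2 * (4 * r\<^sup>2 + slack b)) + 2 * (l t)\<^sup>2"
      unfolding eq using square_add_le[of "g (P - t)" "l t"] by linarith
    also have "\<dots> \<le> (2 * K\<^sup>2 * (4 * r\<^sup>2 + 1) + 2 * (l t)\<^sup>2) * slack b"
      using q mult_left_mono[OF q, of "2 * K\<^sup>2 * 4 * r\<^sup>2 + 2 * (l t)\<^sup>2"]
      by (simp add: algebra_simps)
    finally show "(\<Sum>v\<in>V. l v * of_int (b v))\<^sup>2 \<le> (2 * K\<^sup>2 * (4 * r\<^sup>2 + 1) + 2 * (l t)\<^sup>2) * slack b" .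
  qed
qed


lemma quotient_diff_sq_le_slack:
  obtains C where "\<And>b u v. sum b V = 1 \<Longrightarrow> slack b \<ge> 1 \<Longrightarrow> u \<in> V \<Longrightarrow> v \<in> V \<Longrightarrow>
      (real_of_int (b u) / of_int (y u) - of_int (b v) / of_int (y v))\<^sup>2 \<le> C * slack b"
proof -
  define l where "l p z = (if z = fst p then 1 / real_of_int (y (fst p)) else 0)
                          - (if z = snd p then 1 / of_int (y (snd p)) else 0)" for p :: "'a \<times> 'a" and z
  have l_eval: "(\<Sum>z\<in>V. l (u, v) z * x z) = x u / of_int (y u) - x v / of_int (y v)"
    if "u \<in> V" "v \<in> V" for u v and x :: "'a \<Rightarrow> real"
  proof -
    have "(\<Sum>z\<in>V. l (u, v) z * x z)
        = (\<Sum>z\<in>V. if z = u then x u / of_int (y u) else 0) - (\<Sum>z\<in>V. if z = v then x v / of_int (y v) else 0)"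
      unfolding sum_subtractf[symmetric] by (intro sum.cong refl) (auto simp: l_def algebra_simps)
    then show ?thesis using that finite by (simp add: sum.delta')
  qed
  have "\<forall>p\<in>V \<times> V. \<exists>C. \<forall>b. sum b V = 1 \<longrightarrow> slack b \<ge> 1 \<longrightarrow> (\<Sum>z\<in>V. l p z * of_int (b z))\<^sup>2 \<le> C * slack b"
  proof
    fix p assume "p \<in> V \<times> V"
    then have "(\<Sum>z\<in>V. l p z * of_int (y z)) = 0"
      using l_eval[of "fst p" "snd p" "\<lambda>z. of_int (y z)"] nonzero by (cases p) auto
    then obtain C where "\<And>b. sum b V = 1 \<Longrightarrow> slack b \<ge> 1 \<Longrightarrow> (\<Sum>z\<in>V. l p z * of_int (b z))\<^sup>2 \<le> C * slack b"
      by (rule functional_sq_le_slack) blast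
    then show "\<exists>C. \<forall>b. sum b V = 1 \<longrightarrow> slack b \<ge> 1 \<longrightarrow> (\<Sum>z\<in>V. l p z * of_int (b z))\<^sup>2 \<le> C * slack b"
      by blast
  qed
  from bchoice[OF this] obtain C where C: "\<forall>p\<in>V \<times> V. \<forall>b. sum b V = 1 \<longrightarrow> slack b \<ge> 1 \<longrightarrow>
      (\<Sum>z\<in>V. l p z * of_int (b z))\<^sup>2 \<le> C p * slack b"
    by blast
  show ?thesis
  proof (rule that[of "\<Sum>p\<in>V \<times> V. \<bar>C p\<bar>"])
    fix b u v assume b: "sum b V = 1" "slack b \<ge> 1" and uv: "u \<in> V" "v \<in> V"
    have "(real_of_int (b u) / of_int (y u) - of_int (b v) / of_int (y v))\<^sup>2 \<le> C (u, v) * slack b"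
      using C[rule_format, of "(u, v)" b] b uv l_eval[OF uv, of "\<lambda>z. of_int (b z)"] by simp
    also have "\<dots> \<le> \<bar>C (u, v)\<bar> * slack b"
      using b(2) by (intro mult_right_mono) auto
    also have "\<dots> \<le> (\<Sum>p\<in>V \<times> V. \<bar>C p\<bar>) * slack b"
      using b(2) uv finite by (intro mult_right_mono member_le_sum) auto
    finally show "(real_of_int (b u) / of_int (y u) - of_int (b v) / of_int (y v))\<^sup>2 \<le> (\<Sum>p\<in>V \<times> V. \<bar>C p\<bar>) * slack b" .
  qed
qed

lemma pair_form_balanced_tight:
  assumes g: "g \<in> balanced_forms V (\<lambda>v. of_int (y v))" and b: "sum b V = 1" "slack b = 0"
  shows "pair_form V g (\<lambda>v. of_int (b v)) = 0"
proof -
  obtain w k where "w \<in> V"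
    and "\<And>v. v \<in> V \<Longrightarrow> real_of_int (b v) = (if v = w then 1 else 0) + k * of_int (y v)"
    using tight_decompE b by auto
  then have "pair_form V g (\<lambda>v. of_int (b v)) = pair_form V g (\<lambda>v. (if v = w then 1 else 0) + k * of_int (y v))"
    by (intro pair_form_cong) auto
  also have "\<dots> = 0" using finite g \<open>w \<in> V\<close> by (rule pair_form_balanced_unit_shift)
  finally show ?thesis .
qed

lemma balanced_form_bound:
  assumes g: "g \<in> balanced_forms V (\<lambda>v. of_int (y v))"
  obtains C where "\<And>b. sum b V = 1 \<Longrightarrow> \<bar>pair_form V g (\<lambda>v. of_int (b v))\<bar> \<le> C * slack b"
proof -
  obtain C0 where C0: "\<And>b u v. sum b V = 1 \<Longrightarrow> slack b \<ge> 1 \<Longrightarrow> u \<in> V \<Longrightarrow> v \<in> V \<Longrightarrow>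
      (real_of_int (b u) / of_int (y u) - of_int (b v) / of_int (y v))\<^sup>2 \<le> C0 * slack b"
    by (rule quotient_diff_sq_le_slack) blast
  let ?S = "(\<Sum>u\<in>V. \<Sum>v\<in>V. \<bar>of_int (y u) * of_int (y v) * g (u, v)\<bar>) / 2"
  show ?thesis
  proof (rule that[of "?S * C0"])
    fix b :: "'a \<Rightarrow> int" assume b: "sum b V = 1"
    consider "slack b = 0" | "slack b \<ge> 1" using slack_ge_one[OF b] by force
    then show "\<bar>pair_form V g (\<lambda>v. of_int (b v))\<bar> \<le> ?S * C0 * slack b"
    proof cases
      case 1
      then show ?thesis using pair_form_balanced_tight[OF g b] by simp
    next
      case 2
      then show ?thesis
        using pair_form_balanced_abs_le[OF g, of "\<lambda>v. of_int (b v)" "C0 * slack b"] C0[OF b 2] nonzero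
        by (simp add: mult.assoc)
    qed
  qed
qed

lemma balanced_form_perturbs:
  assumes g: "g \<in> balanced_forms V (\<lambda>v. of_int (y v))"
  shows "\<exists>\<epsilon>>0. (\<lambda>x. dist_fun V x + \<epsilon> * g x) \<in> min_face (HYP V) (dist_fun V)"
proof -
  obtain C where "\<And>b. sum b V = 1 \<Longrightarrow> \<bar>pair_form V g (\<lambda>v. of_int (b v))\<bar> \<le> C * slack b"
    using balanced_form_bound[OF g] by blast
  then show ?thesis
    using g dist_fun_HYP by (intro perturbation_in_min_face) (auto simp: balanced_forms_def)
qed

text \<open>\<open>((card V - 1) choose 2) - 1 = card V * (card V - 3) / 2\<close> is the number of edges of the
  complete graph on \<open>V\<close> minus the number of its vertices.\<close>

theorem delaunay_rank_eq:
  assumes "3 \<le> card V"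
  shows "delaunay_rank V = ((card V - 1) choose 2) - 1"
proof -
  obtain S where "S \<subseteq> V" "card S = 3" using assms obtain_subset_with_card_n by metis
  then obtain p0 p1 p2 where p: "p0 \<in> V" "p1 \<in> V" "p2 \<in> V" "p0 \<noteq> p1" "p0 \<noteq> p2" "p1 \<noteq> p2"
    by (auto simp: card_3_iff)
  interpret weighted_triangle V "\<lambda>v. of_int (y v)" p0 p1 p2
    using p finite nonzero by unfold_locales auto
  let ?d = "dist_fun V"
  let ?M = "min_face (HYP V) ?d"
  have "\<forall>B\<in>free_pairs. \<exists>\<epsilon>>0. (\<lambda>x. ?d x + \<epsilon> * basis_form B x) \<in> ?M"
    using basis_form_balanced balanced_form_perturbs by blast
  from bchoice[OF this] obtain e where e: "\<forall>B\<in>free_pairs. e B > 0 \<and> (\<lambda>x. ?d x + e B * basis_form B x) \<in> ?M"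
    by blast
  then have e_nz: "\<And>B. B \<in> free_pairs \<Longrightarrow> e B \<noteq> 0" by force
  have sub: "(\<lambda>B x. e B * basis_form B x) ` free_pairs \<subseteq> (\<lambda>f x. f x - ?d x) ` ?M"
  proof (intro image_subsetI)
    fix B assume "B \<in> free_pairs"
    then show "(\<lambda>x. e B * basis_form B x) \<in> (\<lambda>f x. f x - ?d x) ` ?M"
      using e by (intro image_eqI[of _ _ "\<lambda>x. ?d x + e B * basis_form B x"]) auto
  qed
  have diff: "(\<lambda>x. f x - g x) \<in> balanced_forms V (\<lambda>v. of_int (y v))" if "f \<in> ?M" "g \<in> ?M" for f g
    using that min_face_subset_tight_face[OF dist_fun_HYP] by (intro tight_face_diff_balanced) auto
  have "?d \<in> ?M" by (simp add: min_face_def)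
  from fun_dim_eqI[OF this diff card_independent_balanced_le sub scaled_basis_independent[OF e_nz]]
  show ?thesis unfolding delaunay_rank_def card_free_pairs .
qed

end

section \<open>The configuration of the theorem\<close>

lemma sum_block:
  assumes "finite S" "\<And>v. v \<in> S \<Longrightarrow> v \<noteq> u \<Longrightarrow> f v = m" "f u = (0::real)"
  shows "sum f S = real (card (S - {u})) * m"
proof -
  have "sum f S = sum f (S - {u})"
    using assms(1,3) by (cases "u \<in> S") (simp_all add: sum_diff1)
  also have "\<dots> = sum (\<lambda>_. m) (S - {u})" using assms(2) by (intro sum.cong) auto
  finally show ?thesis by simp
qed

locale sigma_config =
  fixes A1 A2 B1 B2 :: "'a::real_inner set"
  assumes disj: "A1 \<inter> A2 = {}" "A1 \<inter> B1 = {}" "A1 \<inter> B2 = {}"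
                "A2 \<inter> B1 = {}" "A2 \<inter> B2 = {}" "B1 \<inter> B2 = {}"
    and cards: "card A1 = 3" "card A2 = 3" "card B1 = 4" "card B2 = 4"
    and d_same: "\<And>S u v. S \<in> {A1, A2, B1, B2} \<Longrightarrow> u \<in> S \<Longrightarrow> v \<in> S \<Longrightarrow> u \<noteq> v
                   \<Longrightarrow> (norm (u - v))\<^sup>2 = 7"
    and d_6a: "\<And>u v. u \<in> A1 \<Longrightarrow> v \<in> B1 \<Longrightarrow> (norm (u - v))\<^sup>2 = 6"
    and d_6b: "\<And>u v. u \<in> A2 \<Longrightarrow> v \<in> B2 \<Longrightarrow> (norm (u - v))\<^sup>2 = 6"
    and d_10: "\<And>u v. u \<in> A1 \<Longrightarrow> v \<in> A2 \<Longrightarrow> (norm (u - v))\<^sup>2 = 10"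
    and d_12a: "\<And>u v. u \<in> B1 \<Longrightarrow> v \<in> B2 \<Longrightarrow> (norm (u - v))\<^sup>2 = 12"
    and d_12b: "\<And>u v. u \<in> A1 \<Longrightarrow> v \<in> B2 \<Longrightarrow> (norm (u - v))\<^sup>2 = 12"
    and d_12c: "\<And>u v. u \<in> A2 \<Longrightarrow> v \<in> B1 \<Longrightarrow> (norm (u - v))\<^sup>2 = 12"
begin

abbreviation "V \<equiv> A1 \<union> A2 \<union> B1 \<union> B2"

definition weight :: "'a \<Rightarrow> int" where
  "weight v = (if v \<in> A1 then 3 else if v \<in> A2 then -3 else if v \<in> B2 then 2 else if v \<in> B1 then -2 else 0)"

lemma finite_blocks: "finite A1" "finite A2" "finite B1" "finite B2"
  using cards by (auto intro: card_ge_0_finite)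

lemma card_V: "card V = 14"
  using finite_blocks disj cards by (simp add: card_Un_disjoint Int_Un_distrib2)

lemma weight_blocks:
  "v \<in> A1 \<Longrightarrow> weight v = 3" "v \<in> A2 \<Longrightarrow> weight v = -3"
  "v \<in> B1 \<Longrightarrow> weight v = -2" "v \<in> B2 \<Longrightarrow> weight v = 2"
  using disj by (auto simp: weight_def)

lemma sum_V: "sum f V = sum f A1 + sum f A2 + sum f B1 + sum f B2"
  using finite_blocks disj by (simp add: sum.union_disjoint Int_Un_distrib2)

lemma sq_dist_sym:
  "u \<in> B1 \<Longrightarrow> v \<in> A1 \<Longrightarrow> (norm (u - v))\<^sup>2 = 6" "u \<in> B2 \<Longrightarrow> v \<in> A2 \<Longrightarrow> (norm (u - v))\<^sup>2 = 6"
  "u \<in> A2 \<Longrightarrow> v \<in> A1 \<Longrightarrow> (norm (u - v))\<^sup>2 = 10" "u \<in> B2 \<Longrightarrow> v \<in> B1 \<Longrightarrow> (norm (u - v))\<^sup>2 = 12"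
  "u \<in> B2 \<Longrightarrow> v \<in> A1 \<Longrightarrow> (norm (u - v))\<^sup>2 = 12" "u \<in> B1 \<Longrightarrow> v \<in> A2 \<Longrightarrow> (norm (u - v))\<^sup>2 = 12"
  using d_6a d_6b d_10 d_12a d_12b d_12c by (metis norm_minus_commute)+

lemmas sq_dists = d_same[of A1] d_same[of A2] d_same[of B1] d_same[of B2]
  d_6a d_6b d_10 d_12a d_12b d_12c sq_dist_sym

lemma weighted_row_zero:
  assumes "u \<in> V"
  shows "(\<Sum>v\<in>V. of_int (weight v) * (norm (u - v))\<^sup>2) = (0::real)"
proof -
  let ?f = "\<lambda>v. of_int (weight v) * (norm (u - v))\<^sup>2 :: real"
  have block: "sum ?f S = real (card (S - {u})) * (of_int k * m)"
    if "S \<in> {A1, A2, B1, B2}" "\<And>v. v \<in> S \<Longrightarrow> weight v = k" "\<And>v. v \<in> S \<Longrightarrow> v \<noteq> u \<Longrightarrow> (norm (u - v))\<^sup>2 = m"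
    for S k m
    using that finite_blocks by (intro sum_block) auto
  from assms consider "u \<in> A1" | "u \<in> A2" | "u \<in> B1" | "u \<in> B2" by blast
  then show ?thesis
  proof cases
    case 1
    then show ?thesis
      using block[of A1 3 7] block[of A2 "-3" 10] block[of B1 "-2" 6] block[of B2 2 12] disj cards
      by (simp add: sum_V weight_blocks sq_dists card_Diff_singleton_if)
  next
    case 2
    then show ?thesis
      using block[of A1 3 10] block[of A2 "-3" 7] block[of B1 "-2" 12] block[of B2 2 6] disj cards
      by (simp add: sum_V weight_blocks sq_dists card_Diff_singleton_if)
  next
    case 3
    then show ?thesis
      using block[of A1 3 6] block[of A2 "-3" 12] block[of B1 "-2" 7] block[of B2 2 12] disj cards
      by (simp add: sum_V weight_blocks sq_dists card_Diff_singleton_if)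
  next
    case 4
    then show ?thesis
      using block[of A1 3 12] block[of A2 "-3" 6] block[of B1 "-2" 12] block[of B2 2 7] disj cards
      by (simp add: sum_V weight_blocks sq_dists card_Diff_singleton_if)
  qed
qed


lemma weight_outside: "v \<notin> V \<Longrightarrow> weight v = 0"
  by (simp add: weight_def)

lemma weight_nonzero: "v \<in> V \<Longrightarrow> weight v \<noteq> 0"
  using weight_blocks by fastforce

lemma sum_weight: "sum weight V = 0"
  using cards by (simp add: sum_V weight_blocks)

lemma weight_relation: "affine_relation V (\<lambda>v. of_int (weight v))"
  using sum_weight weighted_row_zero
  by (intro affine_relation_of_null_rows) (simp_all flip: of_int_sum)

lemma sq_dist_Ints: "u \<in> V \<Longrightarrow> v \<in> V \<Longrightarrow> (norm (u - v))\<^sup>2 \<in> \<int>"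
  by (cases "u = v") (auto simp: sq_dists)

lemma weight_unimodular: "\<exists>a. (\<Sum>v\<in>V. a v * weight v) = 1"
proof -
  obtain a1 b1 where ab: "a1 \<in> A1" "b1 \<in> B1" using cards by fastforce
  let ?a = "\<lambda>v. (if v = a1 then 1 else 0) + (if v = b1 then 1 else 0) :: int"
  have "(\<Sum>v\<in>V. ?a v * weight v) = (\<Sum>v\<in>V. if v = a1 then weight v else 0) + (\<Sum>v\<in>V. if v = b1 then weight v else 0)"
    by (simp add: distrib_right sum.distrib if_distrib[of "\<lambda>a. a * _"] cong: if_cong)
  also have "\<dots> = 1" using ab finite_blocks by (simp add: sum.delta' weight_blocks)
  finally show ?thesis by (intro exI[of _ ?a])
qed

lemma weight_not_dvd:
  assumes "u \<in> V"
  shows "\<exists>v\<in>V. \<not> weight u dvd weight v"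
proof -
  obtain a1 b1 where ab: "a1 \<in> A1" "b1 \<in> B1" using cards by fastforce
  from assms consider "u \<in> A1 \<union> A2" | "u \<in> B1 \<union> B2" by blast
  then show ?thesis
  proof cases
    case 1
    then have "\<not> weight u dvd weight b1" using ab by (auto simp: weight_blocks)
    then show ?thesis using ab by blast
  next
    case 2
    then have "\<not> weight u dvd weight a1" using ab by (auto simp: weight_blocks)
    then show ?thesis using ab by blast
  qed
qed

end

theorem mainTheorem3:
  fixes L P :: "(real^12) set"
    and A1 A2 B1 B2 :: "(real^12) set"
  assumes lat: "is_lattice L"
    and del: "delaunay_polytope L P"
    and V14: "card (vertices P) = 14"
    and Vpart: "vertices P = A1 \<union> A2 \<union> B1 \<union> B2"
    and disj: "A1 \<inter> A2 = {}" "A1 \<inter> B1 = {}" "A1 \<inter> B2 = {}"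
              "A2 \<inter> B1 = {}" "A2 \<inter> B2 = {}" "B1 \<inter> B2 = {}"
    and cards: "card A1 = 3" "card A2 = 3" "card B1 = 4" "card B2 = 4"
    and d_same: "\<And>S u v. S \<in> {A1, A2, B1, B2} \<Longrightarrow> u \<in> S \<Longrightarrow> v \<in> S \<Longrightarrow> u \<noteq> v
                   \<Longrightarrow> (norm (u - v))\<^sup>2 = 7"
    and d_6a: "\<And>u v. u \<in> A1 \<Longrightarrow> v \<in> B1 \<Longrightarrow> (norm (u - v))\<^sup>2 = 6"
    and d_6b: "\<And>u v. u \<in> A2 \<Longrightarrow> v \<in> B2 \<Longrightarrow> (norm (u - v))\<^sup>2 = 6"
    and d_10: "\<And>u v. u \<in> A1 \<Longrightarrow> v \<in> A2 \<Longrightarrow> (norm (u - v))\<^sup>2 = 10"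
    and d_12a: "\<And>u v. u \<in> B1 \<Longrightarrow> v \<in> B2 \<Longrightarrow> (norm (u - v))\<^sup>2 = 12"
    and d_12b: "\<And>u v. u \<in> A1 \<Longrightarrow> v \<in> B2 \<Longrightarrow> (norm (u - v))\<^sup>2 = 12"
    and d_12c: "\<And>u v. u \<in> A2 \<Longrightarrow> v \<in> B1 \<Longrightarrow> (norm (u - v))\<^sup>2 = 12"
  shows "(\<forall>u\<in>vertices P. K_affine_basis UNIV (vertices P) (vertices P - {u}))
       \<and> int_affine_deps (vertices P) =
           {(\<lambda>v. k * (if v \<in> A1 then 3 else if v \<in> A2 then -3
                        else if v \<in> B2 then 2 else if v \<in> B1 then -2 else 0)) | k. True}
       \<and> \<not> K_basic \<int> (vertices P)
       \<and> delaunay_rank (vertices P) = 77"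
proof -
  interpret sigma_config A1 A2 B1 B2
    using disj cards d_same d_6a d_6b d_10 d_12a d_12b d_12c by unfold_locales
  obtain c r W where V_eq: "vertices P = L \<inter> sphere c r"
    and empty: "\<And>a. a \<in> L \<Longrightarrow> r\<^sup>2 \<le> (norm (a - c))\<^sup>2"
    and W: "W \<subseteq> vertices P" "\<not> affine_dependent W" "card W = DIM(real^12) + 1"
    using del by (rule delaunay_polytopeE) blast
  note V_eq = V_eq[unfolded Vpart] and W = W[unfolded Vpart]
  have card: "card V = DIM(real^12) + 2" using card_V by simp
  have circuit: "affine_circuit V weight"
    using W card finite_blocks by (intro affine_circuitI weight_relation weight_nonzero weight_outside) auto
  interpret delaunay_circuit V weight L c r
    using circuit lat V_eq empty sq_dist_Ints by (intro delaunay_circuit.intro delaunay_circuit_axioms.intro)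
  have "int_affine_deps V = {(\<lambda>v. k * weight v) | k. True}"
    using weight_unimodular int_affine_deps_eq by blast
  moreover have "delaunay_rank V = 77" using delaunay_rank_eq card_V by (simp add: choose_two)
  ultimately show ?thesis
    using affine_circuit_affine_basis_remove[OF circuit card]
      affine_circuit_not_int_basic[OF circuit card weight_not_dvd]
    unfolding Vpart weight_def by blast
qed

end
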